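(* Let $L\subseteq\Sigma^*$ be a regular closed language with $\kappa(L)=n$ and $L\notin\{\emptyset,\Sigma^*\}$, such that the eight languages $L$, $L^-$, $L^{-*}=L^-\cup\{\epsilon\}$, $L^{-*-}=L\setminus\{\epsilon\}$, $L^*$, $L^{*-}$, $L^{*-*}=L^{*-}\cup\{\epsilon\}$, $L^{*-*-}=L^*\setminus\{\epsilon\}$ are pairwise distinct (in particular $L\ne L^*$). Then: - $\kappa(L)=\kappa(L^-)=n$; - $\kappa(L^* )=\kappa(L^{*-})\le f(n)$; - $\kappa(L^{*-*})=\kappa(L^{*-*-})\le f(n)+1$; - $\kappa(L^{-*})=\kappa(L^{-*-})\le n+1$. Here $f(n)=2^{n-2}+1$ if $L$ is prefix-closed, $f(n)=n-1$ if $L$ is suffix-closed, and $f(n)=2$ if $L$ is factor-closed or subword-closed. Moreover, for each of the classes prefix-closed, suffix-closed and subword-closed (hence also factor-closed), and every sufficiently large $n$ (e.g. $n\ge 4$), there exists a language $L$ of that class with $\kappa(L)=n$ attaining all these bounds simultaneously.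
   Context: $\Sigma$ is a finite non-empty alphabet. $\kappa(L)$ is the number of distinct left quotients $L_w=\{x\mid wx\in L\}$ of $L$ (its state complexity). $L^-=\Sigma^*\setminus L$ is complement and $L^*$ is Kleene star; superscript strings such as $L^{*-*}$ denote successive application of the operations from left to right. A language is prefix-closed (suffix-, factor-, subword-closed) if it contains every prefix (suffix, factor, subword) of each of its words, where subword means scattered subsequence. "Closed" means any of these four. *)

theory Defs
  imports Main "HOL-Library.Sublist"
begin

text \<open>Languages over an explicit finite alphabet Sigma are sets of words in lists Sigma.\<close>

definition compl_lang :: "'a set \<Rightarrow> 'a list set \<Rightarrow> 'a list set" where
  "compl_lang \<Sigma> L = lists \<Sigma> - L"

definition kstar :: "'a list set \<Rightarrow> 'a list set" where
  "kstar L = {concat ws | ws. set ws \<subseteq> L}"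

definition lquot :: "'a list \<Rightarrow> 'a list set \<Rightarrow> 'a list set" where
  "lquot w L = {x. w @ x \<in> L}"

text \<open>State complexity: number of distinct left quotients by words over Sigma.\<close>
definition sc :: "'a set \<Rightarrow> 'a list set \<Rightarrow> nat" where
  "sc \<Sigma> L = card ((\<lambda>w. lquot w L) ` lists \<Sigma>)"

definition regular_lang :: "'a set \<Rightarrow> 'a list set \<Rightarrow> bool" where
  "regular_lang \<Sigma> L \<longleftrightarrow> (\<exists>(Q::nat set) \<delta> q0 F. finite Q \<and> q0 \<in> Q \<and>
      (\<forall>q\<in>Q. \<forall>a\<in>\<Sigma>. \<delta> q a \<in> Q) \<and> F \<subseteq> Q \<and>
      L = {w \<in> lists \<Sigma>. fold (\<lambda>a q. \<delta> q a) w q0 \<in> F})"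

definition prefix_closed :: "'a list set \<Rightarrow> bool" where
  "prefix_closed L \<longleftrightarrow> (\<forall>w\<in>L. \<forall>u. prefix u w \<longrightarrow> u \<in> L)"

definition suffix_closed :: "'a list set \<Rightarrow> bool" where
  "suffix_closed L \<longleftrightarrow> (\<forall>w\<in>L. \<forall>u. suffix u w \<longrightarrow> u \<in> L)"

definition factor_closed :: "'a list set \<Rightarrow> bool" where
  "factor_closed L \<longleftrightarrow> (\<forall>w\<in>L. \<forall>u. sublist u w \<longrightarrow> u \<in> L)"

definition subword_closed :: "'a list set \<Rightarrow> bool" where
  "subword_closed L \<longleftrightarrow> (\<forall>w\<in>L. \<forall>u. subseq u w \<longrightarrow> u \<in> L)"

definition closed_lang :: "'a list set \<Rightarrow> bool" where
  "closed_lang L \<longleftrightarrow> prefix_closed L \<or> suffix_closed L \<or> factor_closed L \<or> subword_closed L"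

text \<open>The eight languages L, L^-, L^{-*}, L^{-*-}, L^*, L^{*-}, L^{*-*}, L^{*-*-}.\<close>
definition eight_langs :: "'a set \<Rightarrow> 'a list set \<Rightarrow> 'a list set list" where
  "eight_langs \<Sigma> L =
    [L, compl_lang \<Sigma> L, kstar (compl_lang \<Sigma> L), compl_lang \<Sigma> (kstar (compl_lang \<Sigma> L)),
     kstar L, compl_lang \<Sigma> (kstar L), kstar (compl_lang \<Sigma> (kstar L)),
     compl_lang \<Sigma> (kstar (compl_lang \<Sigma> (kstar L)))]"

definition hyp :: "'a set \<Rightarrow> 'a list set \<Rightarrow> bool" where
  "hyp \<Sigma> L \<longleftrightarrow> finite \<Sigma> \<and> \<Sigma> \<noteq> {} \<and> L \<subseteq> lists \<Sigma> \<and> regular_lang \<Sigma> L \<and> closed_lang L \<and>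
     L \<noteq> {} \<and> L \<noteq> lists \<Sigma> \<and> distinct (eight_langs \<Sigma> L)"

end

theory Submission
  imports Defs
begin

(* Everything is phrased through left quotients: sc counts the quotients of a language,
   so an upper bound comes from a finite family of languages that contains the language
   and is closed under one-letter quotients, and an exact value from such a family whose
   members are all reached and pairwise distinct.  Write K = L* and n = sc(L).

   1. Complement acts bijectively on quotients, so it preserves sc.  This gives the
      equalities of the theorem, since L^{-*-}, L^{*-}, L^{*-*-} are complements.
   2. For a prefix- or suffix-closed M containing [], (M^-)^* = M^- plus [], so its
      quotients are M^- plus [] and the complements of quotients of M by nonempty
      words: sc((M^-)^* ) <= sc(M) + 1, with equality under a reset/separation
      condition.  Applied to M = L and M = K this bounds L^{-*} and L^{*-*}.
   3. Quotients of K for closed L: if L is prefix-closed, each is {} or (\<Union>T)K for a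
      set T of nonempty quotients containing L (at most 2^(n-2)+1); if L is
      suffix-closed, each is K or qK for a quotient q without [] (at most n-1); if L is
      factor-closed, K consists of all words over the letters of L (at most 2).
   4. Combining 1-3 gives the upper bounds (lemma upper_bounds).
   5. Explicit DFAs give prefix-, suffix- and subword-closed witnesses meeting all
      bounds for every n >= 4 (lemma bounds_attained); the theorem is the conjunction. *)

section \<open>Concatenation, quotients and star\<close>

definition lconc :: "'a list set \<Rightarrow> 'a list set \<Rightarrow> 'a list set" where
  "lconc A B = {x @ y | x y. x \<in> A \<and> y \<in> B}"

lemma lquot_Nil [simp]: "lquot [] X = X"
  by (simp add: lquot_def)

lemma lquot_append: "lquot (u @ v) X = lquot v (lquot u X)"
  by (simp add: lquot_def)

lemma lquot_empty [simp]: "lquot w {} = {}"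
  by (simp add: lquot_def)

lemma lquot_UN: "lquot w (\<Union>i\<in>I. A i) = (\<Union>i\<in>I. lquot w (A i))"
  by (auto simp: lquot_def)

lemma lquot_lists: "X \<subseteq> lists \<Sigma> \<Longrightarrow> lquot w X \<subseteq> lists \<Sigma>"
  by (auto simp: lquot_def)

lemma lquot_lists_eq: "lquot [a] (lists B) = (if a \<in> B then lists B else {})"
  by (auto simp: lquot_def)

text \<open>Brzozowski's rule for the quotient of a concatenation by a letter.\<close>
lemma lquot_lconc:
  "lquot [a] (lconc A B) = lconc (lquot [a] A) B \<union> (if [] \<in> A then lquot [a] B else {})"
  unfolding lquot_def lconc_def by (auto simp: Cons_eq_append_conv split: if_splits)

lemma lconc_Un1: "lconc (A \<union> B) C = lconc A C \<union> lconc B C"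
  by (auto simp: lconc_def)

lemma lconc_empty [simp]: "lconc {} B = {}"
  by (auto simp: lconc_def)

lemma lconc_Nil_sub: "[] \<in> A \<Longrightarrow> B \<subseteq> lconc A B"
  by (force simp: lconc_def)

lemma lconc_mono: "A \<subseteq> A' \<Longrightarrow> lconc A B \<subseteq> lconc A' B"
  by (auto simp: lconc_def)

lemma lconc_memI: "x \<in> A \<Longrightarrow> y \<in> B \<Longrightarrow> x @ y \<in> lconc A B"
  by (auto simp: lconc_def)

lemma single_lconc: "[c] \<in> lconc A B \<longleftrightarrow> ([] \<in> A \<and> [c] \<in> B) \<or> ([c] \<in> A \<and> [] \<in> B)"
  by (auto simp: lconc_def append_eq_Cons_conv Cons_eq_append_conv intro: exI[of _ "[]"])

lemma kstar_Nil [simp]: "[] \<in> kstar L"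
  unfolding kstar_def by (rule CollectI, rule exI[of _ "[]"]) auto

lemma kstar_sub: "L \<subseteq> kstar L"
  unfolding kstar_def by (auto intro!: exI[of _ "[_]"])

lemma kstar_Cons: "x \<in> L \<Longrightarrow> y \<in> kstar L \<Longrightarrow> x @ y \<in> kstar L"
proof -
  assume "x \<in> L" "y \<in> kstar L"
  then obtain ws where "y = concat ws" "set ws \<subseteq> L" by (auto simp: kstar_def)
  then show ?thesis using \<open>x \<in> L\<close> unfolding kstar_def by (auto intro!: exI[of _ "x # ws"])
qed

lemma kstar_induct [consumes 1, case_names Nil append]:
  assumes "w \<in> kstar L" "P []" "\<And>x y. x \<in> L \<Longrightarrow> y \<in> kstar L \<Longrightarrow> P y \<Longrightarrow> P (x @ y)"
  shows "P w"
proof -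
  obtain ws where ws: "w = concat ws" "set ws \<subseteq> L" using assms(1) by (auto simp: kstar_def)
  have "concat ws \<in> kstar L \<and> P (concat ws)" using ws(2)
    by (induction ws) (auto simp: assms(2,3) kstar_Cons)
  then show ?thesis using ws(1) by simp
qed

lemma lconc_kstar_sub: "lconc L (kstar L) \<subseteq> kstar L"
  by (auto simp: lconc_def kstar_Cons)

lemma lconc_kstar_eq: "[] \<in> L \<Longrightarrow> lconc L (kstar L) = kstar L"
  using lconc_kstar_sub lconc_Nil_sub by blast

lemma lconc_absorb: "[] \<in> q \<Longrightarrow> q \<subseteq> L \<Longrightarrow> [] \<in> L \<Longrightarrow> lconc q (kstar L) = kstar L"
  using lconc_Nil_sub[of q "kstar L"] lconc_mono[of q L "kstar L"] lconc_kstar_sub[of L] by blast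

lemma kstar_lists:
  assumes "L \<subseteq> lists S" shows "kstar L \<subseteq> lists S"
proof
  fix w assume "w \<in> kstar L"
  then show "w \<in> lists S" by (induction rule: kstar_induct) (use assms in auto)
qed

lemma kstar_subset_self:
  assumes "[] \<in> L" "\<And>x y. x \<in> L \<Longrightarrow> y \<in> L \<Longrightarrow> x @ y \<in> L"
  shows "kstar L \<subseteq> L"
proof
  fix w assume "w \<in> kstar L"
  then show "w \<in> L" by (induction rule: kstar_induct) (use assms in auto)
qed

lemma lquot_kstar: "lquot [a] (kstar L) = lconc (lquot [a] L) (kstar L)"
proof
  have "w \<in> kstar L \<Longrightarrow> w = a # x \<Longrightarrow> x \<in> lconc (lquot [a] L) (kstar L)" for w x
  proof (induction w arbitrary: x rule: kstar_induct)
    case (append u y)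
    show ?case
    proof (cases u)
      case Nil then show ?thesis using append by simp
    next
      case (Cons b u')
      then have "u' \<in> lquot [a] L" "x = u' @ y" using append by (auto simp: lquot_def)
      then show ?thesis using append.hyps(2) by (auto intro: lconc_memI)
    qed
  qed simp
  then show "lquot [a] (kstar L) \<subseteq> lconc (lquot [a] L) (kstar L)" by (auto simp: lquot_def)
  show "lconc (lquot [a] L) (kstar L) \<subseteq> lquot [a] (kstar L)"
    by (auto simp: lconc_def lquot_def intro: kstar_Cons[where x="a # _", simplified])
qed

lemma single_kstar: "[c] \<in> kstar L \<longleftrightarrow> [c] \<in> L"
proof
  assume "[c] \<in> kstar L"
  then have "[] \<in> lquot [c] (kstar L)" by (simp add: lquot_def)
  then obtain x y where "[] = x @ y" "x \<in> lquot [c] L" by (auto simp: lquot_kstar lconc_def)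
  then show "[c] \<in> L" by (simp add: lquot_def)
qed (use kstar_sub in blast)

section \<open>Counting quotients through closed families\<close>

abbreviation quotients :: "'a set \<Rightarrow> 'a list set \<Rightarrow> 'a list set set" where
  "quotients \<Sigma> X \<equiv> (\<lambda>w. lquot w X) ` lists \<Sigma>"

lemma self_in_quotients: "X \<in> quotients \<Sigma> X"
  by (intro rev_image_eqI[of "[]"]) simp_all

lemma quotient_in_quotients: "q \<in> quotients \<Sigma> X \<Longrightarrow> a \<in> \<Sigma> \<Longrightarrow> lquot [a] q \<in> quotients \<Sigma> X"
proof -
  assume "q \<in> quotients \<Sigma> X" "a \<in> \<Sigma>"
  then obtain w where w: "w \<in> lists \<Sigma>" "q = lquot w X" by blast
  then have "lquot [a] q = lquot (w @ [a]) X" by (simp add: lquot_append)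
  then show ?thesis using w \<open>a \<in> \<Sigma>\<close> by (intro rev_image_eqI[of "w @ [a]"]) simp_all
qed

text \<open>A family containing X and closed under one-letter quotients contains every quotient
  of X.  This is the DFA-free way to bound sc from above.\<close>
lemma quotients_subset_family:
  assumes "X \<in> F" "\<And>Y a. Y \<in> F \<Longrightarrow> a \<in> \<Sigma> \<Longrightarrow> lquot [a] Y \<in> F"
  shows "quotients \<Sigma> X \<subseteq> F"
proof -
  have "lquot w X \<in> F" if "w \<in> lists \<Sigma>" for w
    using that by (induction w rule: rev_induct) (simp_all add: assms lquot_append)
  then show ?thesis by blast
qed

lemma sc_le_family:
  assumes "X \<in> F" "\<And>Y a. Y \<in> F \<Longrightarrow> a \<in> \<Sigma> \<Longrightarrow> lquot [a] Y \<in> F" "finite F"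
  shows "sc \<Sigma> X \<le> card F" "finite (quotients \<Sigma> X)"
proof -
  have "quotients \<Sigma> X \<subseteq> F" by (rule quotients_subset_family[OF assms(1,2)])
  then show "sc \<Sigma> X \<le> card F" "finite (quotients \<Sigma> X)"
    unfolding sc_def using assms(3) by (auto intro: card_mono finite_subset)
qed

lemma sc_eq_family:
  assumes "X \<in> F" "\<And>Y a. Y \<in> F \<Longrightarrow> a \<in> \<Sigma> \<Longrightarrow> lquot [a] Y \<in> F"
    "\<And>Y. Y \<in> F \<Longrightarrow> \<exists>w\<in>lists \<Sigma>. lquot w X = Y"
  shows "sc \<Sigma> X = card F" "quotients \<Sigma> X = F"
proof -
  have "F \<subseteq> quotients \<Sigma> X" using assms(3) by force
  then show "quotients \<Sigma> X = F" using quotients_subset_family[OF assms(1,2)] by blast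
  then show "sc \<Sigma> X = card F" by (simp add: sc_def)
qed

lemma regular_finite_quotients:
  assumes "regular_lang \<Sigma> L" shows "finite (quotients \<Sigma> L)"
proof -
  obtain Q :: "nat set" and \<delta> q0 F where A: "finite Q" "q0 \<in> Q" "\<forall>q\<in>Q. \<forall>a\<in>\<Sigma>. \<delta> q a \<in> Q"
     "L = {w \<in> lists \<Sigma>. fold (\<lambda>a q. \<delta> q a) w q0 \<in> F}"
    using assms unfolding regular_lang_def by blast
  define lang where "lang q = {x \<in> lists \<Sigma>. fold (\<lambda>a q. \<delta> q a) x q \<in> F}" for q
  have in_Q: "fold (\<lambda>a q. \<delta> q a) w q \<in> Q" if "w \<in> lists \<Sigma>" "q \<in> Q" for w q
    using that by (induction w arbitrary: q) (use A(3) in auto)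
  have "lquot w L = lang (fold (\<lambda>a q. \<delta> q a) w q0)" if "w \<in> lists \<Sigma>" for w
    using that unfolding A(4) lquot_def lang_def by auto
  then have "quotients \<Sigma> L \<subseteq> lang ` Q" using in_Q A(2) by blast
  then show ?thesis using A(1) finite_subset by blast
qed

section \<open>Complement\<close>

lemma compl_lists: "compl_lang \<Sigma> X \<subseteq> lists \<Sigma>"
  by (auto simp: compl_lang_def)

lemma lquot_compl:
  "X \<subseteq> lists \<Sigma> \<Longrightarrow> w \<in> lists \<Sigma> \<Longrightarrow> lquot w (compl_lang \<Sigma> X) = lists \<Sigma> - lquot w X"
  by (auto simp: lquot_def compl_lang_def)

lemma inj_on_compl: "inj_on (\<lambda>Y. lists \<Sigma> - Y) {Y. Y \<subseteq> lists \<Sigma>}"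
  by (auto simp: inj_on_def)

text \<open>Quotients of the complement are the complements of the quotients.\<close>
lemma sc_compl:
  assumes "X \<subseteq> lists \<Sigma>" shows "sc \<Sigma> (compl_lang \<Sigma> X) = sc \<Sigma> X"
proof -
  have "quotients \<Sigma> (compl_lang \<Sigma> X) = (\<lambda>Y. lists \<Sigma> - Y) ` quotients \<Sigma> X"
    using assms by (auto simp: lquot_compl image_image)
  moreover have "inj_on (\<lambda>Y. lists \<Sigma> - Y) (quotients \<Sigma> X)"
    by (rule inj_on_subset[OF inj_on_compl]) (use lquot_lists[OF assms] in auto)
  ultimately show ?thesis unfolding sc_def by (simp add: card_image)
qed

section \<open>Closed languages\<close>

text \<open>Every closed language is prefix- or suffix-closed, since factors and subwords
  include prefixes.\<close>
lemma closed_prefix_or_suffix: "closed_lang L \<Longrightarrow> prefix_closed L \<or> suffix_closed L"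
  unfolding closed_lang_def prefix_closed_def suffix_closed_def factor_closed_def subword_closed_def
  using prefix_imp_sublist prefix_imp_subseq by blast

lemma subword_imp_factor_closed: "subword_closed L \<Longrightarrow> factor_closed L"
  unfolding factor_closed_def subword_closed_def using sublist_imp_subseq by blast

lemma subword_imp_prefix_closed: "subword_closed L \<Longrightarrow> prefix_closed L"
  unfolding subword_closed_def prefix_closed_def using prefix_imp_subseq by blast

lemma Nil_in_closed: "prefix_closed L \<or> suffix_closed L \<Longrightarrow> L \<noteq> {} \<Longrightarrow> [] \<in> L"
  unfolding prefix_closed_def suffix_closed_def by auto

lemma Nil_in_prefix_quotient: "prefix_closed M \<Longrightarrow> lquot w M \<noteq> {} \<Longrightarrow> [] \<in> lquot w M"
  unfolding prefix_closed_def lquot_def by auto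

lemma suffix_quotient_subset: "suffix_closed L \<Longrightarrow> lquot w L \<subseteq> L"
  unfolding suffix_closed_def lquot_def by (auto intro: suffixI)

lemma prefix_closed_lists: "prefix_closed (lists A)"
  unfolding prefix_closed_def prefix_def by auto

lemma kstar_prefix_closed: assumes "prefix_closed L" shows "prefix_closed (kstar L)"
  unfolding prefix_closed_def
proof (intro ballI allI impI)
  fix w u assume "w \<in> kstar L" "prefix u w"
  then show "u \<in> kstar L"
  proof (induction w arbitrary: u rule: kstar_induct)
    case (append x y)
    then consider "prefix u x" | r where "u = x @ r" "prefix r y"
      by (metis prefix_append)
    then show ?case
    proof cases
      case 1 then show ?thesis using assms append.hyps(1) kstar_sub unfolding prefix_closed_def by blast
    next
      case 2 then show ?thesis using append by (simp add: kstar_Cons)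
    qed
  qed simp
qed

lemma kstar_suffix_closed: assumes "suffix_closed L" shows "suffix_closed (kstar L)"
  unfolding suffix_closed_def
proof (intro ballI allI impI)
  fix w u assume "w \<in> kstar L" "suffix u w"
  then show "u \<in> kstar L"
  proof (induction w arbitrary: u rule: kstar_induct)
    case (append x y)
    then consider "suffix u y" | r where "u = r @ y" "suffix r x"
      by (metis suffix_append)
    then show ?case
    proof cases
      case 1 then show ?thesis using append by blast
    next
      case 2
      then have "r \<in> L" using assms append.hyps(1) unfolding suffix_closed_def by blast
      then show ?thesis using 2 append.hyps(2) by (simp add: kstar_Cons)
    qed
  qed simp
qed

section \<open>The star of the complement of a closed language\<close>

text \<open>If M is prefix- or suffix-closed and contains [], a product of words outside M is
  again outside M, so (M^-)^* only adds the empty word to M^-.\<close>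
lemma kstar_compl:
  assumes "M \<subseteq> lists \<Sigma>" "[] \<in> M" "prefix_closed M \<or> suffix_closed M"
  shows "kstar (compl_lang \<Sigma> M) = compl_lang \<Sigma> M \<union> {[]}"
proof
  show "compl_lang \<Sigma> M \<union> {[]} \<subseteq> kstar (compl_lang \<Sigma> M)" using kstar_sub by auto
  have "w \<in> compl_lang \<Sigma> M \<union> {[]}" if "w \<in> kstar (compl_lang \<Sigma> M)" for w
    using that
  proof (induction rule: kstar_induct)
    case (append x y)
    have x: "x \<in> lists \<Sigma>" "x \<notin> M" using append.hyps(1) by (auto simp: compl_lang_def)
    have y: "y \<in> lists \<Sigma>" using kstar_lists[OF compl_lists] append.hyps(2) by blast
    have "x @ y \<notin> M"
    proof
      assume xy: "x @ y \<in> M"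
      from assms(3) show False
      proof
        assume "prefix_closed M"
        moreover have "prefix x (x @ y)" by simp
        ultimately show False using xy x(2) unfolding prefix_closed_def by blast
      next
        assume "suffix_closed M"
        moreover have "suffix y (x @ y)" by (rule suffixI) simp
        ultimately have "y \<in> M" using xy unfolding suffix_closed_def by blast
        then have "y = []" using append.IH by (auto simp: compl_lang_def)
        then show False using xy x(2) by simp
      qed
    qed
    then show ?case using x y by (simp add: compl_lang_def)
  qed simp
  then show "kstar (compl_lang \<Sigma> M) \<subseteq> compl_lang \<Sigma> M \<union> {[]}" by blast
qed

text \<open>Quotients of M by nonempty words; they determine all quotients of (M^-)^* except
  the language itself.\<close>
definition proper_quotients :: "'a set \<Rightarrow> 'a list set \<Rightarrow> 'a list set set" where
  "proper_quotients \<Sigma> M = (\<lambda>w. lquot w M) ` (lists \<Sigma> - {[]})"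

lemma quotients_kstar_compl:
  assumes "M \<subseteq> lists \<Sigma>" "[] \<in> M" "prefix_closed M \<or> suffix_closed M"
  shows "quotients \<Sigma> (kstar (compl_lang \<Sigma> M)) =
    insert (compl_lang \<Sigma> M \<union> {[]}) ((\<lambda>Y. lists \<Sigma> - Y) ` proper_quotients \<Sigma> M)"
proof -
  have nonempty: "lquot w (compl_lang \<Sigma> M \<union> {[]}) = lists \<Sigma> - lquot w M"
    if "w \<in> lists \<Sigma>" "w \<noteq> []" for w
    using that lquot_compl[OF assms(1) that(1)] by (auto simp: lquot_def)
  have "quotients \<Sigma> (compl_lang \<Sigma> M \<union> {[]}) =
      insert (lquot [] (compl_lang \<Sigma> M \<union> {[]}))
        ((\<lambda>w. lquot w (compl_lang \<Sigma> M \<union> {[]})) ` (lists \<Sigma> - {[]}))"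
    by blast
  also have "(\<lambda>w. lquot w (compl_lang \<Sigma> M \<union> {[]})) ` (lists \<Sigma> - {[]}) =
      (\<lambda>Y. lists \<Sigma> - Y) ` proper_quotients \<Sigma> M"
    unfolding proper_quotients_def image_image using nonempty by (intro image_cong) auto
  finally show ?thesis unfolding kstar_compl[OF assms] by simp
qed

lemma sc_kstar_compl_le:
  assumes "M \<subseteq> lists \<Sigma>" "[] \<in> M" "prefix_closed M \<or> suffix_closed M" "finite (quotients \<Sigma> M)"
  shows "sc \<Sigma> (kstar (compl_lang \<Sigma> M)) \<le> sc \<Sigma> M + 1"
proof -
  have sub: "proper_quotients \<Sigma> M \<subseteq> quotients \<Sigma> M" unfolding proper_quotients_def by blast
  then have fin: "finite (proper_quotients \<Sigma> M)" using assms(4) by (rule finite_subset)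
  have "sc \<Sigma> (kstar (compl_lang \<Sigma> M)) \<le> card ((\<lambda>Y. lists \<Sigma> - Y) ` proper_quotients \<Sigma> M) + 1"
    unfolding sc_def quotients_kstar_compl[OF assms(1-3)] using fin by (simp add: card_insert_if)
  also have "\<dots> \<le> card (proper_quotients \<Sigma> M) + 1" using card_image_le[OF fin] by simp
  also have "\<dots> \<le> sc \<Sigma> M + 1" unfolding sc_def using card_mono[OF assms(4) sub] by simp
  finally show ?thesis .
qed

text \<open>Equality holds when some nonempty word resets M to itself (so every quotient is
  proper) and no quotient of M by a nonempty word is M without [] (so the language
  itself is not one of the other quotients).\<close>
lemma sc_kstar_compl_eq:
  assumes "M \<subseteq> lists \<Sigma>" "[] \<in> M" "prefix_closed M \<or> suffix_closed M" "finite (quotients \<Sigma> M)"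
    and reset: "w0 \<in> lists \<Sigma>" "w0 \<noteq> []" "lquot w0 M = M"
    and separate: "\<And>w. w \<in> lists \<Sigma> \<Longrightarrow> w \<noteq> [] \<Longrightarrow> lquot w M \<noteq> M - {[]}"
  shows "sc \<Sigma> (kstar (compl_lang \<Sigma> M)) = sc \<Sigma> M + 1"
proof -
  have proper: "proper_quotients \<Sigma> M = quotients \<Sigma> M"
  proof (intro equalityI subsetI)
    fix Y assume "Y \<in> quotients \<Sigma> M"
    then obtain w where "w \<in> lists \<Sigma>" "Y = lquot w M" by blast
    then show "Y \<in> proper_quotients \<Sigma> M"
      using reset unfolding proper_quotients_def by (cases "w = []") force+
  qed (auto simp: proper_quotients_def)
  have inj: "inj_on (\<lambda>Y. lists \<Sigma> - Y) (quotients \<Sigma> M)"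
    by (rule inj_on_subset[OF inj_on_compl]) (use lquot_lists[OF assms(1)] in auto)
  have new: "compl_lang \<Sigma> M \<union> {[]} \<notin> (\<lambda>Y. lists \<Sigma> - Y) ` quotients \<Sigma> M"
  proof
    assume "compl_lang \<Sigma> M \<union> {[]} \<in> (\<lambda>Y. lists \<Sigma> - Y) ` quotients \<Sigma> M"
    then have "compl_lang \<Sigma> M \<union> {[]} \<in> (\<lambda>Y. lists \<Sigma> - Y) ` proper_quotients \<Sigma> M"
      unfolding proper .
    then obtain w where w: "w \<in> lists \<Sigma>" "w \<noteq> []" "compl_lang \<Sigma> M \<union> {[]} = lists \<Sigma> - lquot w M"
      unfolding proper_quotients_def by blast
    have "lquot w M = M - {[]}"
      using w(3) assms(1,2) lquot_lists[OF assms(1), of w] unfolding compl_lang_def by auto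
    then show False using separate w by blast
  qed
  show ?thesis
    unfolding sc_def quotients_kstar_compl[OF assms(1-3)] proper
    using assms(4) inj new by (simp add: card_image)
qed

text \<open>For a prefix-closed M the separation condition holds as soon as M has a nonempty word:
  every quotient is empty or contains [].\<close>
lemma prefix_closed_separate:
  assumes "prefix_closed M" "x \<in> M" "x \<noteq> []"
  shows "lquot w M \<noteq> M - {[]}"
  using Nil_in_prefix_quotient[OF assms(1), of w] assms by auto

section \<open>Quotients of the star of a closed language\<close>

lemma card_subsets_containing:
  assumes "finite A" "x \<in> A"
  shows "card {T. T \<subseteq> A \<and> x \<in> T} = 2 ^ (card A - 1)"
proof -
  have "{T. T \<subseteq> A \<and> x \<in> T} = insert x ` Pow (A - {x})"
  proof (intro equalityI subsetI)
    fix T assume "T \<in> {T. T \<subseteq> A \<and> x \<in> T}"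
    then have "T = insert x (T - {x})" "T - {x} \<in> Pow (A - {x})" by auto
    then show "T \<in> insert x ` Pow (A - {x})" by blast
  qed (use assms(2) in auto)
  moreover have "inj_on (insert x) (Pow (A - {x}))" unfolding inj_on_def by blast
  ultimately show ?thesis using assms by (simp add: card_image card_Pow card_Diff_singleton)
qed

text \<open>A quotient of L* by a letter, starting from (\<Union>T)L* with T a set of
  quotients of L containing L, is again of this form with only nonempty members, or empty:
  the letter acts on every member of T, and since nonempty quotients contain [], the
  resulting union absorbs the restart term (a\<inverse>L)L*.\<close>
lemma prefix_star_quotient_step:
  assumes L: "prefix_closed L" "[] \<in> L" and T: "T \<subseteq> quotients \<Sigma> L" "L \<in> T" and a: "a \<in> \<Sigma>"
  defines "Y \<equiv> lquot [a] (lconc (\<Union>T) (kstar L))"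
  shows "Y = {} \<or> (\<exists>T'. T' \<subseteq> quotients \<Sigma> L - {{}} \<and> L \<in> T' \<and> Y = lconc (\<Union>T') (kstar L))"
proof -
  define U where "U = (\<lambda>q. lquot [a] q) ` T"
  have U_quotients: "U \<subseteq> quotients \<Sigma> L"
    using T(1) quotient_in_quotients[OF _ a] unfolding U_def by blast
  have "Y = lconc (lquot [a] (\<Union>T)) (kstar L) \<union> lquot [a] (kstar L)"
    using T(2) L(2) unfolding Y_def by (auto simp: lquot_lconc)
  also have "lquot [a] (kstar L) = lconc (lquot [a] L) (kstar L)" by (rule lquot_kstar)
  also have "lquot [a] (\<Union>T) = \<Union>U" unfolding U_def lquot_def by auto
  also have "lconc (\<Union>U) (kstar L) \<union> lconc (lquot [a] L) (kstar L) = lconc (\<Union>U) (kstar L)"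
    using T(2) unfolding U_def lconc_def by blast
  finally have Y: "Y = lconc (\<Union>U) (kstar L)" .
  show ?thesis
  proof (cases "\<Union>U = {}")
    case True then show ?thesis unfolding Y True by simp
  next
    case False
    then obtain q where q: "q \<in> U" "q \<noteq> {}" by blast
    then have "[] \<in> q" using U_quotients Nil_in_prefix_quotient[OF L(1)] by blast
    define T' where "T' = insert L (U - {{}})"
    have "lconc (\<Union>T') (kstar L) = lconc L (kstar L) \<union> lconc (\<Union>U) (kstar L)"
      unfolding T'_def lconc_def by blast
    also have "lconc L (kstar L) = kstar L" by (rule lconc_kstar_eq[OF L(2)])
    also have "kstar L \<union> lconc (\<Union>U) (kstar L) = lconc (\<Union>U) (kstar L)"
      using \<open>[] \<in> q\<close> q(1) lconc_Nil_sub[of "\<Union>U" "kstar L"] by blast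
    finally have "Y = lconc (\<Union>T') (kstar L)" using Y by simp
    moreover have "T' \<subseteq> quotients \<Sigma> L - {{}}"
      using U_quotients self_in_quotients L(2) unfolding T'_def by blast
    ultimately show ?thesis unfolding T'_def by blast
  qed
qed

text \<open>Hence a prefix-closed L with n quotients, one of them empty, has at most 2^(n-2)+1
  star quotients: the empty one and one for each set of nonempty quotients containing L.\<close>
lemma sc_kstar_prefix_closed:
  assumes L: "L \<subseteq> lists \<Sigma>" "prefix_closed L" "[] \<in> L" "L \<noteq> lists \<Sigma>" "finite (quotients \<Sigma> L)"
  shows "sc \<Sigma> (kstar L) \<le> 2 ^ (sc \<Sigma> L - 2) + 1" "finite (quotients \<Sigma> (kstar L))"
proof -
  define Q0 where "Q0 = quotients \<Sigma> L - {{}}"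
  define \<T> where "\<T> = {T. T \<subseteq> Q0 \<and> L \<in> T}"
  define F where "F = insert {} ((\<lambda>T. lconc (\<Union>T) (kstar L)) ` \<T>)"
  have empty_quotient: "{} \<in> quotients \<Sigma> L"
  proof -
    obtain w where "w \<in> lists \<Sigma>" "w \<notin> L" using L(1,4) by blast
    then have "lquot w L = {}" using L(2) unfolding prefix_closed_def lquot_def by auto
    then show ?thesis using \<open>w \<in> lists \<Sigma>\<close> by (intro rev_image_eqI[of w]) simp_all
  qed
  have L_Q0: "L \<in> Q0" using L(3) self_in_quotients unfolding Q0_def by auto
  have fin_Q0: "finite Q0" using L(5) unfolding Q0_def by auto
  have card_Q0: "card Q0 = sc \<Sigma> L - 1"
    using empty_quotient L(5) unfolding Q0_def sc_def by (simp add: card_Diff_singleton)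
  have K_in_F: "kstar L \<in> F"
  proof -
    have "lconc (\<Union>{L}) (kstar L) = kstar L" using lconc_kstar_eq[OF L(3)] by simp
    moreover have "{L} \<in> \<T>" using L_Q0 unfolding \<T>_def by auto
    ultimately show ?thesis unfolding F_def by (metis image_eqI insertI2)
  qed
  have closed: "lquot [a] Y \<in> F" if Y_in: "Y \<in> F" and a: "a \<in> \<Sigma>" for Y a
  proof (cases "Y = {}")
    case False
    then obtain T where "T \<in> \<T>" "Y = lconc (\<Union>T) (kstar L)"
      using Y_in unfolding F_def by blast
    then have T: "T \<subseteq> quotients \<Sigma> L" "L \<in> T" "Y = lconc (\<Union>T) (kstar L)"
      unfolding \<T>_def Q0_def by auto
    have "lquot [a] Y = {} \<or> (\<exists>T'. T' \<in> \<T> \<and> lquot [a] Y = lconc (\<Union>T') (kstar L))"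
      using prefix_star_quotient_step[OF L(2,3) T(1,2) a] unfolding T(3) \<T>_def Q0_def by simp
    then show ?thesis unfolding F_def by blast
  qed (simp add: F_def)
  have fin_\<T>: "finite \<T>" using fin_Q0 unfolding \<T>_def by simp
  have "card F \<le> Suc (card ((\<lambda>T. lconc (\<Union>T) (kstar L)) ` \<T>))"
    unfolding F_def using fin_\<T> by (simp add: card_insert_if)
  also have "\<dots> \<le> card \<T> + 1" using card_image_le[OF fin_\<T>] by simp
  also have "card \<T> = 2 ^ (sc \<Sigma> L - 2)"
    unfolding \<T>_def card_subsets_containing[OF fin_Q0 L_Q0] card_Q0 by simp
  finally have "card F \<le> 2 ^ (sc \<Sigma> L - 2) + 1" .
  moreover have "finite F" unfolding F_def using fin_\<T> by simp
  ultimately show "sc \<Sigma> (kstar L) \<le> 2 ^ (sc \<Sigma> L - 2) + 1" "finite (quotients \<Sigma> (kstar L))"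
    using sc_le_family[OF K_in_F closed] by fastforce+
qed

text \<open>If L* differs from L (and [] is in L), some word of L leads to a quotient that
  contains [] but differs from L: otherwise L would be closed under concatenation.\<close>
lemma accepting_quotient_other_than_self:
  assumes "L \<subseteq> lists \<Sigma>" "[] \<in> L" "kstar L \<noteq> L"
  obtains q where "q \<in> quotients \<Sigma> L" "[] \<in> q" "q \<noteq> L"
proof -
  have "\<exists>x\<in>L. lquot x L \<noteq> L"
  proof (rule ccontr)
    assume "\<not> (\<exists>x\<in>L. lquot x L \<noteq> L)"
    then have "x @ y \<in> L" if "x \<in> L" "y \<in> L" for x y
      using that by (auto simp: lquot_def)
    then have "kstar L \<subseteq> L" by (rule kstar_subset_self[OF assms(2)])
    then show False using assms(3) kstar_sub by blast
  qed
  then obtain x where "x \<in> L" "lquot x L \<noteq> L" by blast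
  moreover have "x \<in> lists \<Sigma>" "[] \<in> lquot x L" using \<open>x \<in> L\<close> assms(1) by (auto simp: lquot_def)
  ultimately show thesis using that by blast
qed

text \<open>Every quotient q of L lies in L, so qL* = L* whenever [] is in q;
  the quotients of L* are therefore L* and the languages qL* with [] not in q.  At least two
  quotients of L contain [], which leaves at most n-2 choices for q.\<close>
lemma sc_kstar_suffix_closed:
  assumes L: "L \<subseteq> lists \<Sigma>" "suffix_closed L" "[] \<in> L" "finite (quotients \<Sigma> L)" "kstar L \<noteq> L"
  shows "sc \<Sigma> (kstar L) \<le> sc \<Sigma> L - 1" "finite (quotients \<Sigma> (kstar L))"
proof -
  define K where "K = kstar L"
  define N where "N = {q \<in> quotients \<Sigma> L. [] \<notin> q}"
  define A where "A = {q \<in> quotients \<Sigma> L. [] \<in> q}"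
  define F where "F = insert K ((\<lambda>q. lconc q K) ` N)"
  have in_F: "lconc q K \<in> F" if "q \<in> quotients \<Sigma> L" for q
  proof (cases "[] \<in> q")
    case True
    have "q \<subseteq> L" using that suffix_quotient_subset[OF L(2)] by blast
    then have "lconc q K = K" unfolding K_def using lconc_absorb True L(3) by blast
    then show ?thesis unfolding F_def by simp
  next
    case False then show ?thesis using that unfolding F_def N_def by blast
  qed
  have closed: "lquot [a] Y \<in> F" if "Y \<in> F" "a \<in> \<Sigma>" for Y a
  proof -
    from that(1) consider "Y = K" | q where "q \<in> N" "Y = lconc q K" unfolding F_def by blast
    then show ?thesis
    proof cases
      case 1
      then have "lquot [a] Y = lconc (lquot [a] L) K" unfolding K_def by (simp add: lquot_kstar)
      then show ?thesis using in_F quotient_in_quotients[OF self_in_quotients that(2)] by simp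
    next
      case 2
      then have "lquot [a] Y = lconc (lquot [a] q) K" unfolding N_def by (simp add: lquot_lconc)
      then show ?thesis using in_F quotient_in_quotients[OF _ that(2)] 2 unfolding N_def by simp
    qed
  qed
  have fin_N: "finite N" "finite A" using L(4) unfolding N_def A_def by simp_all
  obtain q2 where "q2 \<in> quotients \<Sigma> L" "[] \<in> q2" "q2 \<noteq> L"
    using accepting_quotient_other_than_self[OF L(1,3,5)] .
  then have "{L, q2} \<subseteq> A" using self_in_quotients L(3) unfolding A_def by blast
  moreover have "card {L, q2} = 2" using \<open>q2 \<noteq> L\<close> by simp
  ultimately have "2 \<le> card A" using card_mono[OF fin_N(2)] by metis
  moreover have "card N + card A = sc \<Sigma> L"
  proof -
    have "quotients \<Sigma> L = N \<union> A" "N \<inter> A = {}" unfolding N_def A_def by blast+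
    then show ?thesis unfolding sc_def using card_Un_disjoint[OF fin_N] by simp
  qed
  moreover have "card F \<le> card N + 1"
  proof -
    have "card F \<le> Suc (card ((\<lambda>q. lconc q K) ` N))"
      unfolding F_def using fin_N(1) by (simp add: card_insert_if)
    then show ?thesis using card_image_le[OF fin_N(1), of "\<lambda>q. lconc q K"] by simp
  qed
  ultimately have "card F \<le> sc \<Sigma> L - 1" by linarith
  moreover have "finite F" "K \<in> F" unfolding F_def using fin_N(1) by simp_all
  ultimately show "sc \<Sigma> (kstar L) \<le> sc \<Sigma> L - 1" "finite (quotients \<Sigma> (kstar L))"
    using sc_le_family[OF _ closed] unfolding K_def by fastforce+
qed

lemma kstar_factor_closed:
  assumes "L \<subseteq> lists \<Sigma>" "factor_closed L"
  shows "kstar L = lists {a \<in> \<Sigma>. [a] \<in> L}"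
proof
  show "kstar L \<subseteq> lists {a \<in> \<Sigma>. [a] \<in> L}"
  proof
    fix w assume "w \<in> kstar L"
    then show "w \<in> lists {a \<in> \<Sigma>. [a] \<in> L}"
    proof (induction rule: kstar_induct)
      case (append x y)
      have "[a] \<in> L" if a_in: "a \<in> set x" for a
      proof -
        obtain p s where "x = p @ a # s" using split_list[OF a_in] by blast
        then have "sublist [a] x" unfolding sublist_def by auto
        then show ?thesis using assms(2) append.hyps(1) unfolding factor_closed_def by blast
      qed
      then show ?case using append assms(1) by auto
    qed simp
  qed
  show "lists {a \<in> \<Sigma>. [a] \<in> L} \<subseteq> kstar L"
  proof
    fix w assume "w \<in> lists {a \<in> \<Sigma>. [a] \<in> L}"
    then show "w \<in> kstar L" by (induction w) (use kstar_Cons[of "[_]" L] in auto)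
  qed
qed

lemma quotients_lists: "quotients \<Sigma> (lists B) \<subseteq> {lists B, {}}"
proof (rule quotients_subset_family)
  show "\<And>Y a. Y \<in> {lists B, {}} \<Longrightarrow> a \<in> \<Sigma> \<Longrightarrow> lquot [a] Y \<in> {lists B, {}}"
    unfolding insert_iff empty_iff by (elim disjE) (simp_all add: lquot_lists_eq)
qed simp

lemma sc_lists_le: "sc \<Sigma> (lists B) \<le> 2" "finite (quotients \<Sigma> (lists B))"
proof -
  have sub: "quotients \<Sigma> (lists B) \<subseteq> {lists B, {}}" by (rule quotients_lists)
  then show "finite (quotients \<Sigma> (lists B))" by (rule finite_subset) simp
  have "card (quotients \<Sigma> (lists B)) \<le> card {lists B, {}}" using sub by (intro card_mono) simp_all
  also have "\<dots> \<le> 2" by (simp add: card_insert_if)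
  finally show "sc \<Sigma> (lists B) \<le> 2" unfolding sc_def .
qed

lemma sc_lists:
  assumes "b \<in> \<Sigma>" "b \<notin> B" shows "sc \<Sigma> (lists B) = 2"
proof -
  have "lquot [b] (lists B) = {}" using assms(2) by (simp add: lquot_lists_eq)
  then have "{} \<in> quotients \<Sigma> (lists B)" using assms(1) by (intro image_eqI[of _ _ "[b]"]) simp_all
  then have "{lists B, {}} \<subseteq> quotients \<Sigma> (lists B)" using self_in_quotients by blast
  then have "quotients \<Sigma> (lists B) = {lists B, {}}" by (intro subset_antisym quotients_lists)
  moreover have "lists B \<noteq> {}" using lists.Nil by blast
  ultimately show ?thesis unfolding sc_def by simp
qed

section \<open>Upper bounds\<close>

lemma kstar_bound_by_class:
  assumes "hyp \<Sigma> L"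
  shows "prefix_closed L \<Longrightarrow> sc \<Sigma> (kstar L) \<le> 2 ^ (sc \<Sigma> L - 2) + 1"
    and "suffix_closed L \<Longrightarrow> sc \<Sigma> (kstar L) \<le> sc \<Sigma> L - 1"
    and "factor_closed L \<Longrightarrow> sc \<Sigma> (kstar L) \<le> 2"
    and "finite (quotients \<Sigma> (kstar L))"
    and "prefix_closed (kstar L) \<or> suffix_closed (kstar L)"
proof -
  have L: "L \<subseteq> lists \<Sigma>" "regular_lang \<Sigma> L" "closed_lang L" "L \<noteq> {}" "L \<noteq> lists \<Sigma>"
    and distinct: "distinct (eight_langs \<Sigma> L)"
    using assms unfolding hyp_def by auto
  have fin: "finite (quotients \<Sigma> L)" by (rule regular_finite_quotients[OF L(2)])
  have ps: "prefix_closed L \<or> suffix_closed L" by (rule closed_prefix_or_suffix[OF L(3)])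
  have Nil: "[] \<in> L" by (rule Nil_in_closed[OF ps L(4)])
  have "kstar L \<noteq> L"
  proof
    assume "kstar L = L"
    moreover have "L \<notin> set (tl (eight_langs \<Sigma> L))" using distinct unfolding eight_langs_def by simp
    moreover have "kstar L \<in> set (tl (eight_langs \<Sigma> L))" unfolding eight_langs_def by simp
    ultimately show False by simp
  qed
  show "prefix_closed L \<Longrightarrow> sc \<Sigma> (kstar L) \<le> 2 ^ (sc \<Sigma> L - 2) + 1"
    using sc_kstar_prefix_closed[OF L(1) _ Nil L(5) fin] by blast
  show "suffix_closed L \<Longrightarrow> sc \<Sigma> (kstar L) \<le> sc \<Sigma> L - 1"
    using sc_kstar_suffix_closed[OF L(1) _ Nil fin \<open>kstar L \<noteq> L\<close>] by blast
  show "factor_closed L \<Longrightarrow> sc \<Sigma> (kstar L) \<le> 2"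
    using kstar_factor_closed[OF L(1)] sc_lists_le(1) by simp
  show "finite (quotients \<Sigma> (kstar L))"
    using sc_kstar_prefix_closed(2)[OF L(1) _ Nil L(5) fin]
      sc_kstar_suffix_closed(2)[OF L(1) _ Nil fin \<open>kstar L \<noteq> L\<close>] ps by blast
  show "prefix_closed (kstar L) \<or> suffix_closed (kstar L)"
    using ps kstar_prefix_closed kstar_suffix_closed by blast
qed

lemma upper_bounds:
  assumes hyp: "hyp \<Sigma> L" and n: "sc \<Sigma> L = n"
  shows "let Lm = compl_lang \<Sigma> L; Lmst = kstar Lm; Lmstm = compl_lang \<Sigma> Lmst;
           Ls = kstar L; Lsm = compl_lang \<Sigma> Ls; Lsms = kstar Lsm; Lsmsm = compl_lang \<Sigma> Lsms
       in sc \<Sigma> Lm = n \<and>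
          sc \<Sigma> Ls = sc \<Sigma> Lsm \<and>
          sc \<Sigma> Lsms = sc \<Sigma> Lsmsm \<and>
          sc \<Sigma> Lmst = sc \<Sigma> Lmstm \<and> sc \<Sigma> Lmst \<le> n + 1 \<and>
          (prefix_closed L \<longrightarrow> sc \<Sigma> Ls \<le> 2 ^ (n - 2) + 1 \<and> sc \<Sigma> Lsms \<le> 2 ^ (n - 2) + 2) \<and>
          (suffix_closed L \<longrightarrow> sc \<Sigma> Ls \<le> n - 1 \<and> sc \<Sigma> Lsms \<le> n) \<and>
          (factor_closed L \<or> subword_closed L \<longrightarrow> sc \<Sigma> Ls \<le> 2 \<and> sc \<Sigma> Lsms \<le> 3)"
proof -
  have L: "L \<subseteq> lists \<Sigma>" "regular_lang \<Sigma> L" "closed_lang L" "L \<noteq> {}"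
    using hyp unfolding hyp_def by auto
  have ps: "prefix_closed L \<or> suffix_closed L" by (rule closed_prefix_or_suffix[OF L(3)])
  have K_lists: "kstar L \<subseteq> lists \<Sigma>" by (rule kstar_lists[OF L(1)])
  note star = kstar_bound_by_class[OF hyp]
  have "quotients \<Sigma> L \<noteq> {}" "finite (quotients \<Sigma> L)"
    using self_in_quotients regular_finite_quotients[OF L(2)] by blast+
  then have "n \<noteq> 0" using n unfolding sc_def by (metis card_0_eq)
  have compl_L: "sc \<Sigma> (compl_lang \<Sigma> L) = n" using sc_compl[OF L(1)] n by simp
  have compl_K: "sc \<Sigma> (kstar L) = sc \<Sigma> (compl_lang \<Sigma> (kstar L))"
    by (rule sc_compl[OF K_lists, symmetric])
  have compl_star: "sc \<Sigma> (kstar (compl_lang \<Sigma> X)) = sc \<Sigma> (compl_lang \<Sigma> (kstar (compl_lang \<Sigma> X)))" for X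
    by (rule sc_compl[OF kstar_lists[OF compl_lists], symmetric])
  have star_compl: "sc \<Sigma> (kstar (compl_lang \<Sigma> L)) \<le> n + 1"
    using sc_kstar_compl_le[OF L(1) Nil_in_closed[OF ps L(4)] ps regular_finite_quotients[OF L(2)]] n
    by simp
  have star_compl_star: "sc \<Sigma> (kstar (compl_lang \<Sigma> (kstar L))) \<le> sc \<Sigma> (kstar L) + 1"
    by (rule sc_kstar_compl_le[OF K_lists kstar_Nil star(5) star(4)])
  have prefix: "sc \<Sigma> (kstar L) \<le> 2 ^ (n - 2) + 1 \<and>
      sc \<Sigma> (kstar (compl_lang \<Sigma> (kstar L))) \<le> 2 ^ (n - 2) + 2" if "prefix_closed L"
  proof -
    have "sc \<Sigma> (kstar L) \<le> 2 ^ (n - 2) + 1" using star(1)[OF that] n by simp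
    then show ?thesis using star_compl_star by linarith
  qed
  have suffix: "sc \<Sigma> (kstar L) \<le> n - 1 \<and> sc \<Sigma> (kstar (compl_lang \<Sigma> (kstar L))) \<le> n"
    if "suffix_closed L"
  proof -
    have "sc \<Sigma> (kstar L) \<le> n - 1" using star(2)[OF that] n by simp
    then show ?thesis using star_compl_star \<open>n \<noteq> 0\<close> by linarith
  qed
  have factor: "sc \<Sigma> (kstar L) \<le> 2 \<and> sc \<Sigma> (kstar (compl_lang \<Sigma> (kstar L))) \<le> 3"
    if "factor_closed L \<or> subword_closed L"
  proof -
    have "sc \<Sigma> (kstar L) \<le> 2" using star(3) that subword_imp_factor_closed by blast
    then show ?thesis using star_compl_star by linarith
  qed
  show ?thesis unfolding Let_def
    using compl_L compl_K compl_star star_compl prefix suffix factor by blast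
qed

section \<open>Languages of deterministic automata\<close>

definition run :: "(nat \<Rightarrow> 'a \<Rightarrow> nat) \<Rightarrow> 'a list \<Rightarrow> nat \<Rightarrow> nat" where
  "run \<delta> w q = fold (\<lambda>a q. \<delta> q a) w q"

definition dfa_lang :: "'a set \<Rightarrow> (nat \<Rightarrow> 'a \<Rightarrow> nat) \<Rightarrow> nat set \<Rightarrow> nat \<Rightarrow> 'a list set" where
  "dfa_lang \<Sigma> \<delta> F q = {x \<in> lists \<Sigma>. run \<delta> x q \<in> F}"

lemma run_Nil [simp]: "run \<delta> [] q = q"
  by (simp add: run_def)

lemma run_Cons [simp]: "run \<delta> (a # w) q = run \<delta> w (\<delta> q a)"
  by (simp add: run_def)

lemma run_append: "run \<delta> (u @ v) q = run \<delta> v (run \<delta> u q)"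
  by (simp add: run_def)

lemma lquot_dfa_lang: "w \<in> lists \<Sigma> \<Longrightarrow> lquot w (dfa_lang \<Sigma> \<delta> F q) = dfa_lang \<Sigma> \<delta> F (run \<delta> w q)"
  by (auto simp: lquot_def dfa_lang_def run_append)

lemma lquot_dfa_lang_step: "a \<in> \<Sigma> \<Longrightarrow> lquot [a] (dfa_lang \<Sigma> \<delta> F q) = dfa_lang \<Sigma> \<delta> F (\<delta> q a)"
  using lquot_dfa_lang[of "[a]" \<Sigma> \<delta> F q] by simp

lemma Nil_dfa_lang: "[] \<in> dfa_lang \<Sigma> \<delta> F q \<longleftrightarrow> q \<in> F"
  by (simp add: dfa_lang_def)

lemma single_dfa_lang: "[a] \<in> dfa_lang \<Sigma> \<delta> F q \<longleftrightarrow> a \<in> \<Sigma> \<and> \<delta> q a \<in> F"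
  by (simp add: dfa_lang_def)

lemma dfa_lang_lists: "dfa_lang \<Sigma> \<delta> F q \<subseteq> lists \<Sigma>"
  by (auto simp: dfa_lang_def)

lemma run_in:
  "(\<And>q a. q \<in> Q \<Longrightarrow> a \<in> \<Sigma> \<Longrightarrow> \<delta> q a \<in> Q) \<Longrightarrow> w \<in> lists \<Sigma> \<Longrightarrow> q \<in> Q \<Longrightarrow> run \<delta> w q \<in> Q"
  by (induction w arbitrary: q) auto

lemma run_dead: "(\<And>a. \<delta> d a = d) \<Longrightarrow> run \<delta> w d = d"
  by (induction w) auto

lemma regular_dfa_lang:
  assumes "finite Q" "0 \<in> Q" "\<And>q a. q \<in> Q \<Longrightarrow> a \<in> \<Sigma> \<Longrightarrow> \<delta> q a \<in> Q" "F \<subseteq> Q"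
  shows "regular_lang \<Sigma> (dfa_lang \<Sigma> \<delta> F 0)"
  unfolding regular_lang_def dfa_lang_def run_def using assms by blast

text \<open>States are naturals, so it suffices to
  separate each state from every larger one.\<close>
lemma sc_dfa:
  assumes "finite Q" "q0 \<in> Q" "\<And>q a. q \<in> Q \<Longrightarrow> a \<in> \<Sigma> \<Longrightarrow> \<delta> q a \<in> Q"
    "\<And>q. q \<in> Q \<Longrightarrow> \<exists>w\<in>lists \<Sigma>. run \<delta> w q0 = q"
    "\<And>p q. p \<in> Q \<Longrightarrow> q \<in> Q \<Longrightarrow> p < q \<Longrightarrow> dfa_lang \<Sigma> \<delta> F p \<noteq> dfa_lang \<Sigma> \<delta> F q"
  shows "sc \<Sigma> (dfa_lang \<Sigma> \<delta> F q0) = card Q" "quotients \<Sigma> (dfa_lang \<Sigma> \<delta> F q0) = dfa_lang \<Sigma> \<delta> F ` Q"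
proof -
  have cl: "lquot [a] Y \<in> dfa_lang \<Sigma> \<delta> F ` Q" if "Y \<in> dfa_lang \<Sigma> \<delta> F ` Q" "a \<in> \<Sigma>" for Y a
    using that assms(3) by (auto simp: lquot_dfa_lang_step)
  have re: "\<exists>w\<in>lists \<Sigma>. lquot w (dfa_lang \<Sigma> \<delta> F q0) = Y" if Yin: "Y \<in> dfa_lang \<Sigma> \<delta> F ` Q" for Y
  proof -
    obtain q where "q \<in> Q" "Y = dfa_lang \<Sigma> \<delta> F q" using Yin by blast
    then obtain w where "w \<in> lists \<Sigma>" "run \<delta> w q0 = q" using assms(4) by blast
    then have "lquot w (dfa_lang \<Sigma> \<delta> F q0) = Y" using \<open>Y = _\<close> lquot_dfa_lang[of w \<Sigma> \<delta> F q0] by simp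
    then show ?thesis using \<open>w \<in> lists \<Sigma>\<close> by blast
  qed
  have X: "dfa_lang \<Sigma> \<delta> F q0 \<in> dfa_lang \<Sigma> \<delta> F ` Q" using assms(2) by blast
  have inj: "inj_on (dfa_lang \<Sigma> \<delta> F) Q"
  proof (rule inj_onI, rule ccontr)
    fix p q assume "p \<in> Q" "q \<in> Q" "dfa_lang \<Sigma> \<delta> F p = dfa_lang \<Sigma> \<delta> F q" "p \<noteq> q"
    then show False using assms(5)[of p q] assms(5)[of q p] by (metis linorder_neq_iff)
  qed
  show "quotients \<Sigma> (dfa_lang \<Sigma> \<delta> F q0) = dfa_lang \<Sigma> \<delta> F ` Q" by (rule sc_eq_family(2)[OF X cl re])
  show "sc \<Sigma> (dfa_lang \<Sigma> \<delta> F q0) = card Q"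
    using sc_eq_family(1)[OF X cl re] card_image[OF inj] by simp
qed

lemma prefix_dfa:
  assumes "\<And>q a. q \<in> Q \<Longrightarrow> a \<in> \<Sigma> \<Longrightarrow> \<delta> q a \<in> Q" "q0 \<in> Q" "\<And>a. \<delta> d a = d" "d \<notin> F" "Q - {d} \<subseteq> F"
  shows "prefix_closed (dfa_lang \<Sigma> \<delta> F q0)"
  unfolding prefix_closed_def
proof (intro ballI allI impI)
  fix w u assume w: "w \<in> dfa_lang \<Sigma> \<delta> F q0" and "prefix u w"
  then obtain v where v: "w = u @ v" by (auto simp: prefix_def)
  have ul: "u \<in> lists \<Sigma>" using w v by (auto simp: dfa_lang_def)
  have "run \<delta> w q0 = run \<delta> v (run \<delta> u q0)" using v by (simp add: run_append)
  moreover have "run \<delta> w q0 \<in> F" using w by (simp add: dfa_lang_def)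
  ultimately have "run \<delta> u q0 \<noteq> d" using run_dead[of \<delta> d, OF assms(3)] assms(4) by auto
  moreover have "run \<delta> u q0 \<in> Q" using run_in[of Q \<Sigma> \<delta>, OF assms(1) ul assms(2)] .
  ultimately show "u \<in> dfa_lang \<Sigma> \<delta> F q0" using ul assms(5) by (auto simp: dfa_lang_def)
qed

text \<open>Given a nonempty word x of L and a word y of L* outside L, the eight languages are told
  apart by which of [], x, y they contain (using the description of the starred complements
  from kstar_compl).\<close>
lemma eight_distinct:
  assumes L: "L \<subseteq> lists \<Sigma>" "[] \<in> L" "prefix_closed L \<or> suffix_closed L"
    and x: "x \<in> L" "x \<noteq> []" and y: "y \<in> kstar L" "y \<notin> L"
  shows "distinct (eight_langs \<Sigma> L)"
proof -
  have KL: "kstar L \<subseteq> lists \<Sigma>" using kstar_lists[OF L(1)] .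
  have Kc: "prefix_closed (kstar L) \<or> suffix_closed (kstar L)" using L(3) kstar_prefix_closed kstar_suffix_closed by blast
  note e1 = kstar_compl[OF L]
  note e2 = kstar_compl[OF KL kstar_Nil Kc]
  have xl: "x \<in> lists \<Sigma>" using x L(1) by blast
  have yl: "y \<in> lists \<Sigma>" using y KL by blast
  have yne: "y \<noteq> []" using y L(2) by auto
  have xK: "x \<in> kstar L" using x kstar_sub by blast
  define v where "v Z = ([] \<in> Z, x \<in> Z, y \<in> Z)" for Z :: "'a list set"
  have m: "x \<notin> lists \<Sigma> - L" "y \<in> lists \<Sigma> - L" "[] \<notin> lists \<Sigma> - L"
    "x \<notin> lists \<Sigma> - kstar L" "y \<notin> lists \<Sigma> - kstar L" "[] \<notin> lists \<Sigma> - kstar L"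
    using x y xl yl L(2) xK by auto
  have v1: "v L = (True, True, False)" using x y L(2) by (simp add: v_def)
  have v2: "v (compl_lang \<Sigma> L) = (False, False, True)" using m by (simp add: v_def compl_lang_def)
  have v3: "v (compl_lang \<Sigma> L \<union> {[]}) = (True, False, True)" using m x(2) by (simp add: v_def compl_lang_def)
  have v4: "v (compl_lang \<Sigma> (compl_lang \<Sigma> L \<union> {[]})) = (False, True, False)"
    using m x(2) xl yl yne by (simp add: v_def compl_lang_def)
  have v5: "v (kstar L) = (True, True, True)" using xK y by (simp add: v_def)
  have v6: "v (compl_lang \<Sigma> (kstar L)) = (False, False, False)" using m by (simp add: v_def compl_lang_def)
  have v7: "v (compl_lang \<Sigma> (kstar L) \<union> {[]}) = (True, False, False)" using m x(2) yne by (simp add: v_def compl_lang_def)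
  have v8: "v (compl_lang \<Sigma> (compl_lang \<Sigma> (kstar L) \<union> {[]})) = (False, True, True)"
    using m x(2) xl yl yne by (simp add: v_def compl_lang_def)
  have "map v (eight_langs \<Sigma> L) = [(True, True, False), (False, False, True), (True, False, True),
     (False, True, False), (True, True, True), (False, False, False), (True, False, False), (False, True, True)]"
    unfolding eight_langs_def e1 e2 list.map v1 v2 v3 v4 v5 v6 v7 v8 by (rule refl)
  then have "distinct (map v (eight_langs \<Sigma> L))" by simp
  then show ?thesis by (simp only: distinct_map)
qed

lemma hyp_intro:
  assumes "finite \<Sigma>" "L \<subseteq> lists \<Sigma>" "regular_lang \<Sigma> L" "closed_lang L" "[] \<in> L"
    and "z \<in> lists \<Sigma>" "z \<notin> L" and "x \<in> L" "x \<noteq> []" and "y \<in> kstar L" "y \<notin> L"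
  shows "hyp \<Sigma> L"
proof -
  have "\<Sigma> \<noteq> {}" using assms(5-7) by (cases z) auto
  moreover have "distinct (eight_langs \<Sigma> L)"
    using eight_distinct[OF assms(2,5) closed_prefix_or_suffix[OF assms(4)] assms(8-11)] .
  ultimately show ?thesis unfolding hyp_def using assms(1-7) by blast
qed

section \<open>A prefix-closed witness\<close>

text \<open>Alphabet {0..2m}, states 0..m+1 with m+1 dead and all others final.  This DFA is minimal with m+2 states, and the quotients of its
  star are {} and the languages Z_T below, one for each subset T of {1..m}.\<close>
definition dpre :: "nat \<Rightarrow> nat \<Rightarrow> nat \<Rightarrow> nat" where
  "dpre m q a = (if q = 0 then (if a = 0 then 0 else if odd a then (a + 1) div 2 else m + 1)
     else if q \<le> m then (if a = 0 \<or> odd a \<or> a = 2 * q then q else m + 1) else m + 1)"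

abbreviation "Apre m \<equiv> {0..2 * m}"
abbreviation "Lpre_from m q \<equiv> dfa_lang (Apre m) (dpre m) {0..m} q"
abbreviation "Lpre m \<equiv> Lpre_from m 0"
abbreviation "Kpre m \<equiv> kstar (Lpre m)"

lemma dpre_0a [simp]: "dpre m q 0 = (if q \<le> m then q else m + 1)"
  by (simp add: dpre_def)

lemma dpre_odd0 [simp]: "j \<ge> 1 \<Longrightarrow> dpre m 0 (2 * j - 1) = j"
  unfolding dpre_def by (cases j) auto

lemma dpre_odd [simp]: "j \<ge> 1 \<Longrightarrow> q \<ge> 1 \<Longrightarrow> dpre m q (2 * j - 1) = (if q \<le> m then q else m + 1)"
  unfolding dpre_def by (cases j) auto

text \<open>The same two facts in the normal form the simplifier produces for 2j - 1.\<close>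
lemma dpre_odd0' [simp]: "j \<ge> 1 \<Longrightarrow> dpre m 0 (2 * j - Suc 0) = j"
  using dpre_odd0 by simp

lemma dpre_odd' [simp]: "j \<ge> 1 \<Longrightarrow> q \<ge> 1 \<Longrightarrow> dpre m q (2 * j - Suc 0) = (if q \<le> m then q else m + 1)"
  using dpre_odd by simp

lemma dpre_even0 [simp]: "j \<ge> 1 \<Longrightarrow> dpre m 0 (2 * j) = m + 1"
  unfolding dpre_def by auto

lemma dpre_even [simp]: "j \<ge> 1 \<Longrightarrow> q \<ge> 1 \<Longrightarrow> dpre m q (2 * j) = (if q \<le> m \<and> q = j then q else m + 1)"
  unfolding dpre_def by auto

lemma dpre_dead [simp]: "dpre m (Suc m) a = Suc m"
  by (simp add: dpre_def)

lemma Apre_cases: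
  fixes a :: nat
  assumes "a \<in> Apre m"
  obtains "a = 0" | j where "j \<in> {1..m}" "a = 2 * j - 1" | j where "j \<in> {1..m}" "a = 2 * j"
proof -
  consider "a = 0" | "odd a" | "even a" "a \<noteq> 0" by blast
  then show thesis
  proof cases
    case 2
    then obtain k where "a = 2 * k + 1" by (metis oddE)
    then show thesis using that(2)[of "k + 1"] assms by auto
  next
    case 3
    then obtain k where "a = 2 * k" by blast
    then show thesis using that(3)[of k] assms 3 by auto
  qed (use that in auto)
qed

lemma dpre_in: "q \<in> {0..m+1} \<Longrightarrow> a \<in> Apre m \<Longrightarrow> dpre m q a \<in> {0..m+1}"
proof -
  assume q: "q \<in> {0..m+1}" and a: "a \<in> Apre m"
  have "dpre m q a \<le> m + 1"
  proof (cases "q = 0")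
    case True
    show ?thesis using a
    proof (rule Apre_cases)
      fix j assume "j \<in> {1..m}" "a = 2 * j - 1" then show ?thesis using True by simp
    qed (use True in simp_all)
  next
    case False
    then show ?thesis unfolding dpre_def by auto
  qed
  then show ?thesis by simp
qed

lemma Lpre_from_dead: "Lpre_from m (m + 1) = {}"
proof -
  have "\<forall>x. run (dpre m) x (m + 1) = m + 1" by (intro allI run_dead) simp
  then show ?thesis by (auto simp: dfa_lang_def)
qed

lemma Nil_Lpre_from: "q \<le> m \<Longrightarrow> [] \<in> Lpre_from m q"
  by (simp add: Nil_dfa_lang)

lemma Lpre_prefix: "prefix_closed (Lpre m)"
proof (rule prefix_dfa[where Q="{0..m+1}" and d="m+1"])
  show "\<And>q a. q \<in> {0..m + 1} \<Longrightarrow> a \<in> Apre m \<Longrightarrow> dpre m q a \<in> {0..m + 1}" by (rule dpre_in)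
qed auto

text \<open>The states are separated by [] (dead vs. live) and by the letters 2q.\<close>
lemma Lpre_from_separate:
  assumes "p \<in> {0..m+1}" "q \<in> {0..m+1}" "p < q"
  shows "Lpre_from m p \<noteq> Lpre_from m q"
proof (cases "q = m + 1")
  case True
  then have "Lpre_from m q = {}" using Lpre_from_dead by simp
  moreover have "[] \<in> Lpre_from m p" using assms True by (simp add: Nil_dfa_lang)
  ultimately show ?thesis by blast
next
  case False
  then have q: "q \<in> {1..m}" "p \<le> m" using assms by auto
  have "[2 * q] \<in> Lpre_from m q" using q by (simp add: single_dfa_lang)
  moreover have "[2 * q] \<notin> Lpre_from m p"
  proof (cases "p = 0")
    case True then show ?thesis using q dpre_even0[of q m] by (simp add: single_dfa_lang)
  next
    case False then show ?thesis using q assms(3) dpre_even[of q p m] by (simp add: single_dfa_lang)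
  qed
  ultimately show ?thesis by blast
qed

lemma sc_Lpre:
  assumes m1: "1 \<le> m"
  shows "sc (Apre m) (Lpre m) = m + 2" "quotients (Apre m) (Lpre m) = Lpre_from m ` {0..m+1}"
proof -
  have reach: "\<exists>w\<in>lists (Apre m). run (dpre m) w 0 = q" if "q \<in> {0..m+1}" for q
  proof -
    have "q = 0 \<or> q \<in> {1..m} \<or> q = m + 1" using that by auto
    then consider "q = 0" | "q \<in> {1..m}" | "q = m + 1" by blast
    then show ?thesis
    proof cases
      case 1 then show ?thesis by (intro bexI[of _ "[]"]) auto
    next
      case 2 then show ?thesis using dpre_odd0[of q m] by (intro bexI[of _ "[2 * q - 1]"]) auto
    next
      case 3
      have "dpre m 0 2 = m + 1" using dpre_even0[of 1 m] by simp
      then show ?thesis using 3 m1 by (intro bexI[of _ "[2]"]) auto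
    qed
  qed
  note S = sc_dfa[of "{0..m+1}" 0 "Apre m" "dpre m" "{0..m}", OF _ _ dpre_in reach Lpre_from_separate]
  show "sc (Apre m) (Lpre m) = m + 2" using S(1) by simp
  show "quotients (Apre m) (Lpre m) = Lpre_from m ` {0..m+1}" using S(2) by simp
qed

text \<open>Quotient of the star indexed by a set T of nonzero states: Z_T = (L_0 \<union> \<Union>_{q\<in>T} L_q) L*.\<close>
definition Zpre :: "nat \<Rightarrow> nat set \<Rightarrow> nat list set" where
  "Zpre m T = lconc (\<Union>q\<in>insert 0 T. Lpre_from m q) (Kpre m)"

lemma Nil_Lpre: "[] \<in> Lpre m"
  by (simp add: Nil_dfa_lang)

lemma Zpre_empty: "Zpre m {} = Kpre m"
  unfolding Zpre_def using lconc_kstar_eq[OF Nil_Lpre] by simp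

lemma Nil_Zpre: "[] \<in> Zpre m T"
proof -
  have "[] \<in> (\<Union>q\<in>insert 0 T. Lpre_from m q)" using Nil_Lpre by blast
  then have "[] @ [] \<in> Zpre m T" unfolding Zpre_def by (rule lconc_memI) simp
  then show ?thesis by simp
qed

lemma Zpre_quot:
  assumes "a \<in> Apre m"
  shows "lquot [a] (Zpre m T) = lconc (\<Union>q\<in>(\<lambda>q. dpre m q a) ` insert 0 T. Lpre_from m q) (Kpre m)"
proof -
  have n: "[] \<in> (\<Union>q\<in>insert 0 T. Lpre_from m q)" using Nil_Lpre by blast
  have u: "lquot [a] (\<Union>q\<in>insert 0 T. Lpre_from m q) = (\<Union>q\<in>(\<lambda>q. dpre m q a) ` insert 0 T. Lpre_from m q)"
    unfolding lquot_UN using lquot_dfa_lang_step[OF assms] by auto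
  have k: "lquot [a] (Kpre m) = lconc (Lpre_from m (dpre m 0 a)) (Kpre m)"
    unfolding lquot_kstar lquot_dfa_lang_step[OF assms] ..
  have s: "lconc (Lpre_from m (dpre m 0 a)) (Kpre m) \<subseteq> lconc (\<Union>q\<in>(\<lambda>q. dpre m q a) ` insert 0 T. Lpre_from m q) (Kpre m)"
    by (rule lconc_mono) blast
  show ?thesis unfolding Zpre_def lquot_lconc if_P[OF n] u k using s by blast
qed

text \<open>The initial state's language L_0 = L is absorbed by any other live state, since
  L_s contains [] and L L* = L*.\<close>
lemma Zpre_absorb:
  assumes "s \<in> S" "s \<le> m"
  shows "lconc (\<Union>q\<in>insert 0 S. Lpre_from m q) (Kpre m) = lconc (\<Union>q\<in>S. Lpre_from m q) (Kpre m)"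
proof -
  have "(\<Union>q\<in>insert 0 S. Lpre_from m q) = Lpre m \<union> (\<Union>q\<in>S. Lpre_from m q)" by simp
  then have "lconc (\<Union>q\<in>insert 0 S. Lpre_from m q) (Kpre m) = Kpre m \<union> lconc (\<Union>q\<in>S. Lpre_from m q) (Kpre m)"
    using lconc_kstar_eq[OF Nil_Lpre] by (simp add: lconc_Un1)
  moreover have "Kpre m \<subseteq> lconc (\<Union>q\<in>S. Lpre_from m q) (Kpre m)"
    using assms Nil_Lpre_from[of s m] by (intro lconc_Nil_sub) blast
  ultimately show ?thesis by blast
qed

lemma UN_dead: "(\<Union>q\<in>insert (m + 1) X. Lpre_from m q) = (\<Union>q\<in>X. Lpre_from m q)"
  using Lpre_from_dead[of m] by simp

lemma lquot_Zpre_zero: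
  assumes "T \<subseteq> {1..m}" shows "lquot [0] (Zpre m T) = Zpre m T"
proof -
  have "(\<lambda>q. dpre m q 0) ` insert 0 T = insert 0 T" using assms by force
  then show ?thesis using Zpre_quot[of 0 m T] unfolding Zpre_def by simp
qed

lemma lquot_Zpre_odd:
  assumes j: "j \<in> {1..m}" and T: "T \<subseteq> {1..m}"
  shows "lquot [2 * j - 1] (Zpre m T) = Zpre m (insert j T)"
proof -
  have "(\<lambda>q. dpre m q (2 * j - 1)) ` insert 0 T = insert j T"
  proof -
    have "dpre m 0 (2 * j - 1) = j" using j by simp
    moreover have "dpre m q (2 * j - 1) = q" if "q \<in> T" for q using that T j by auto
    ultimately show ?thesis by force
  qed
  moreover have "2 * j - 1 \<in> Apre m" using j by auto
  ultimately have "lquot [2 * j - 1] (Zpre m T) = lconc (\<Union>q\<in>insert j T. Lpre_from m q) (Kpre m)"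
    using Zpre_quot[of "2 * j - 1" m T] by simp
  also have "\<dots> = Zpre m (insert j T)" unfolding Zpre_def using j by (intro Zpre_absorb[symmetric]) auto
  finally show ?thesis .
qed

lemma lquot_Zpre_even:
  assumes j: "j \<in> {1..m}" and T: "T \<subseteq> {1..m}"
  shows "lquot [2 * j] (Zpre m T) = (if j \<in> T then Zpre m {j} else {})"
proof -
  have "(\<lambda>q. dpre m q (2 * j)) ` insert 0 T = insert (m + 1) (T \<inter> {j})"
  proof -
    have "dpre m 0 (2 * j) = m + 1" using j by simp
    moreover have "dpre m q (2 * j) = (if q = j then q else m + 1)" if "q \<in> T" for q
      using that T j by auto
    ultimately show ?thesis by force
  qed
  moreover have "2 * j \<in> Apre m" using j by auto
  ultimately have e: "lquot [2 * j] (Zpre m T) = lconc (\<Union>q\<in>T \<inter> {j}. Lpre_from m q) (Kpre m)"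
    using Zpre_quot[of "2 * j" m T] UN_dead by simp
  show ?thesis
  proof (cases "j \<in> T")
    case True
    then have "T \<inter> {j} = {j}" by auto
    then have "lquot [2 * j] (Zpre m T) = lconc (\<Union>q\<in>{j}. Lpre_from m q) (Kpre m)" using e by simp
    also have "\<dots> = Zpre m {j}" unfolding Zpre_def using j by (intro Zpre_absorb[symmetric]) auto
    finally show ?thesis using True by simp
  next
    case False
    then have "T \<inter> {j} = {}" by auto
    then show ?thesis using e False by simp
  qed
qed

lemma Zpre_quot_cases:
  assumes a: "a \<in> Apre m" and T: "T \<subseteq> {1..m}"
  shows "lquot [a] (Zpre m T) \<in> insert {} (Zpre m ` Pow {1..m})"
  using a
proof (rule Apre_cases)
  assume "a = 0" then show ?thesis using lquot_Zpre_zero[OF T] T by blast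
next
  fix j assume "j \<in> {1..m}" "a = 2 * j - 1"
  then show ?thesis using lquot_Zpre_odd[OF _ T] T by blast
next
  fix j assume "j \<in> {1..m}" "a = 2 * j"
  then show ?thesis using lquot_Zpre_even[OF _ T] by auto
qed

text \<open>Every Z_T is reached, by reading the odd letters of the members of T.\<close>
lemma Zpre_reach:
  assumes "finite T" "T \<subseteq> {1..m}"
  shows "\<exists>w\<in>lists (Apre m). lquot w (Kpre m) = Zpre m T"
  using assms
proof (induction T rule: finite_induct)
  case empty
  have "lquot [] (Kpre m) = Zpre m {}" using Zpre_empty by simp
  then show ?case by blast
next
  case (insert j T)
  then obtain w where w: "w \<in> lists (Apre m)" "lquot w (Kpre m) = Zpre m T" by auto
  have j: "j \<in> {1..m}" and T: "T \<subseteq> {1..m}" using insert.prems by auto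
  then have "lquot (w @ [2 * j - 1]) (Kpre m) = Zpre m (insert j T)"
    using w lquot_Zpre_odd[OF j T] by (simp add: lquot_append)
  moreover have "w @ [2 * j - 1] \<in> lists (Apre m)" using w j by auto
  ultimately show ?case by blast
qed

lemma Zpre_mem:
  assumes "j \<in> {1..m}" "T \<subseteq> {1..m}"
  shows "[2 * j] \<in> Zpre m T \<longleftrightarrow> j \<in> T"
proof -
  have jS: "2 * j \<in> Apre m" using assms by auto
  have nK: "[2 * j] \<notin> Kpre m" unfolding single_kstar using assms by (simp add: single_dfa_lang)
  have "[2 * j] \<in> (\<Union>q\<in>insert 0 T. Lpre_from m q) \<longleftrightarrow> j \<in> T"
  proof
    assume "[2 * j] \<in> (\<Union>q\<in>insert 0 T. Lpre_from m q)"
    then obtain q where q: "q \<in> insert 0 T" "[2 * j] \<in> Lpre_from m q" by blast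
    then have "dpre m q (2 * j) \<le> m" by (simp add: single_dfa_lang)
    then show "j \<in> T" using q(1) assms
      by (cases "q = 0") (auto split: if_splits)
  next
    assume "j \<in> T"
    then have "[2 * j] \<in> Lpre_from m j" using assms by (simp add: single_dfa_lang)
    then show "[2 * j] \<in> (\<Union>q\<in>insert 0 T. Lpre_from m q)" using \<open>j \<in> T\<close> by blast
  qed
  then show ?thesis unfolding Zpre_def single_lconc using nK by simp
qed

lemma inj_on_Zpre: "inj_on (Zpre m) (Pow {1..m})"
proof (rule inj_onI)
  fix T T' assume T: "T \<in> Pow {1..m}" "T' \<in> Pow {1..m}" "Zpre m T = Zpre m T'"
  have "j \<in> T \<longleftrightarrow> j \<in> T'" if "j \<in> {1..m}" for j
    using T Zpre_mem[OF that, of T] Zpre_mem[OF that, of T'] by simp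
  then show "T = T'" using T(1,2) by blast
qed

lemma sc_Kpre:
  assumes "1 \<le> m"
  shows "sc (Apre m) (Kpre m) = 2 ^ m + 1" "quotients (Apre m) (Kpre m) = insert {} (Zpre m ` Pow {1..m})"
proof -
  define F where "F = insert {} (Zpre m ` Pow {1..m})"
  have K_in_F: "Kpre m \<in> F" unfolding F_def using Zpre_empty by (metis Pow_bottom image_eqI insertI2)
  have closed: "lquot [a] Y \<in> F" if "Y \<in> F" "a \<in> Apre m" for Y a
    using that Zpre_quot_cases unfolding F_def by auto
  have reach: "\<exists>w\<in>lists (Apre m). lquot w (Kpre m) = Y" if "Y \<in> F" for Y
  proof -
    have "lquot [2] (Kpre m) = {}" using lquot_Zpre_even[of 1 m "{}"] assms Zpre_empty by simp
    moreover have "[2] \<in> lists (Apre m)" using assms by simp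
    ultimately show ?thesis
      using that Zpre_reach[of _ m] finite_subset[of _ "{1..m}"] unfolding F_def by blast
  qed
  have "{} \<notin> Zpre m ` Pow {1..m}" using Nil_Zpre by blast
  then have "card F = Suc (card (Zpre m ` Pow {1..m}))" unfolding F_def by simp
  also have "card (Zpre m ` Pow {1..m}) = 2 ^ m" using card_image[OF inj_on_Zpre] by (simp add: card_Pow)
  finally show "sc (Apre m) (Kpre m) = 2 ^ m + 1" using sc_eq_family(1)[OF K_in_F closed reach] by simp
  show "quotients (Apre m) (Kpre m) = insert {} (Zpre m ` Pow {1..m})"
    using sc_eq_family(2)[OF K_in_F closed reach] unfolding F_def .
qed

lemma witness_prefix_closed:
  assumes n: "n \<ge> 4"
  shows "\<exists>(\<Sigma>::nat set) L. hyp \<Sigma> L \<and> prefix_closed L \<and> sc \<Sigma> L = n \<and>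
          sc \<Sigma> (kstar L) = 2 ^ (n - 2) + 1 \<and>
          sc \<Sigma> (kstar (compl_lang \<Sigma> (kstar L))) = 2 ^ (n - 2) + 1 + 1 \<and>
          sc \<Sigma> (kstar (compl_lang \<Sigma> L)) = n + 1"
proof -
  define m where "m = n - 2"
  have m2: "m \<ge> 2" and nm: "n = m + 2" using n unfolding m_def by auto
  have L_lists: "Lpre m \<subseteq> lists (Apre m)" by (rule dfa_lang_lists)
  have K_lists: "Kpre m \<subseteq> lists (Apre m)" by (rule kstar_lists[OF L_lists])
  have pL: "prefix_closed (Lpre m)" by (rule Lpre_prefix)
  have pK: "prefix_closed (Kpre m)" by (rule kstar_prefix_closed[OF pL])
  have x: "[0] \<in> Lpre m" by (simp add: single_dfa_lang dpre_def)
  have xK: "[0] \<in> Kpre m" using x kstar_sub by blast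
  have "[1, 2] \<in> Lpre m" "[3, 4] \<in> Lpre m" using m2 by (simp_all add: dfa_lang_def dpre_def)
  then have yK: "[1, 2] @ [3, 4] @ [] \<in> Kpre m" by (intro kstar_Cons kstar_Nil)
  have yL: "[1, 2, 3, 4] \<notin> Lpre m" using m2 by (simp add: dfa_lang_def dpre_def)
  have z: "[2] \<notin> Lpre m" "[2] \<in> lists (Apre m)" using m2 by (simp_all add: single_dfa_lang dpre_def)
  have reg: "regular_lang (Apre m) (Lpre m)"
    by (rule regular_dfa_lang[where Q="{0..m+1}"]) (use dpre_in in auto)
  have hyp: "hyp (Apre m) (Lpre m)"
    using hyp_intro[OF _ L_lists reg _ Nil_Lpre z(2,1) x _ yK[unfolded append.simps] yL] pL unfolding closed_lang_def by simp
  have scL: "sc (Apre m) (Lpre m) = n" using sc_Lpre(1)[of m] m2 nm by simp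
  have scK: "sc (Apre m) (Kpre m) = 2 ^ (n - 2) + 1" using sc_Kpre(1)[of m] m2 unfolding m_def by simp
  have finL: "finite (quotients (Apre m) (Lpre m))" using sc_Lpre(2)[of m] m2 by simp
  have finK: "finite (quotients (Apre m) (Kpre m))" using sc_Kpre(2)[of m] m2 by simp
  have r0: "[0] \<in> lists (Apre m)" by simp
  have resetL: "lquot [0] (Lpre m) = Lpre m" by (simp add: lquot_dfa_lang_step dpre_def)
  have resetK: "lquot [0] (Kpre m) = Kpre m"
    unfolding lquot_kstar resetL by (rule lconc_kstar_eq[OF Nil_Lpre])
  have "sc (Apre m) (kstar (compl_lang (Apre m) (Lpre m))) = n + 1"
    using sc_kstar_compl_eq[OF L_lists Nil_Lpre _ finL r0 _ resetL prefix_closed_separate[OF pL x]] pL scL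
    by simp
  moreover have "sc (Apre m) (kstar (compl_lang (Apre m) (Kpre m))) = 2 ^ (n - 2) + 1 + 1"
    using sc_kstar_compl_eq[OF K_lists kstar_Nil _ finK r0 _ resetK prefix_closed_separate[OF pK xK]] pK scK
    by simp
  ultimately show ?thesis using hyp pL scL scK by blast
qed

section \<open>A suffix-closed witness\<close>

text \<open>Alphabet {0,1}, states 0..m+1 with final states 0 and 1 and m+1 dead.  From 0 the
  letter 0 loops and 1 jumps to m; from q in 1..m the letter 0 counts down to q-1 and 1 kills.
  Thus L = (0 \<union> 1 0^m)^* (\<epsilon> \<union> 1 0^(m-1)); it is suffix-closed with m+2 quotients, while L*
  has only m+1 of them: L* itself and (L_s)L* for the states s in 2..m+1.\<close>
definition dsuf :: "nat \<Rightarrow> nat \<Rightarrow> nat \<Rightarrow> nat" where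
  "dsuf m q a = (if q = 0 then (if a = 0 then 0 else m)
     else if q \<le> m then (if a = 0 then q - 1 else m + 1) else m + 1)"

abbreviation "Asuf \<equiv> {0::nat, 1}"
abbreviation "Lsuf_from m q \<equiv> dfa_lang Asuf (dsuf m) {0, 1} q"
abbreviation "Lsuf m \<equiv> Lsuf_from m 0"
abbreviation "Ksuf m \<equiv> kstar (Lsuf m)"

lemma dsuf_in: "q \<in> {0..m+1} \<Longrightarrow> a \<in> Asuf \<Longrightarrow> dsuf m q a \<in> {0..m+1}"
  unfolding dsuf_def by auto

lemma dsuf_dead [simp]: "dsuf m (Suc m) a = Suc m"
  by (simp add: dsuf_def)

lemma dsuf_00 [simp]: "dsuf m 0 0 = 0"
  by (simp add: dsuf_def)

lemma dsuf_01 [simp]: "dsuf m 0 (Suc 0) = m"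
  by (simp add: dsuf_def)

lemma dsuf_q0: "1 \<le> q \<Longrightarrow> q \<le> m \<Longrightarrow> dsuf m q 0 = q - 1"
  by (simp add: dsuf_def)

lemma dsuf_q1: "1 \<le> q \<Longrightarrow> dsuf m q (Suc 0) = m + 1"
  by (simp add: dsuf_def)

lemma run_dsuf_dead: "run (dsuf m) x (Suc m) = Suc m"
  by (rule run_dead) simp

lemma Lsuf_from_dead: "m \<ge> 1 \<Longrightarrow> Lsuf_from m (m + 1) = {}"
  using run_dsuf_dead[of m] by (auto simp: dfa_lang_def)

lemma run_rep0: "q \<le> m \<Longrightarrow> run (dsuf m) (replicate k 0) q = q - k"
proof (induction k arbitrary: q)
  case 0 then show ?case by simp
next
  case (Suc k)
  have "dsuf m q 0 = q - 1" using Suc.prems by (simp add: dsuf_def)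
  then show ?case using Suc by simp
qed

text \<open>Every state language lies in L: from a state q \<ge> 1 an accepted word starts with a block
  of 0s leading down to 0 or 1, and state 0 accepts the same word by looping on these 0s.\<close>
lemma Lsuf_from_sub: "q \<in> {0..m+1} \<Longrightarrow> x \<in> Lsuf_from m q \<Longrightarrow> m \<ge> 2 \<Longrightarrow> x \<in> Lsuf m"
proof (induction x arbitrary: q)
  case Nil then show ?case by (simp add: dfa_lang_def)
next
  case (Cons a x)
  have xl: "x \<in> lists Asuf" "a \<in> Asuf" using Cons.prems by (auto simp: dfa_lang_def)
  have r: "run (dsuf m) x (dsuf m q a) \<in> {0, 1}" using Cons.prems by (simp add: dfa_lang_def)
  show ?case
  proof (cases "q = 0")
    case True then show ?thesis using Cons.prems by simp
  next
    case False
    show ?thesis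
    proof (cases "q \<le> m \<and> a = 0")
      case True
      then have "dsuf m q a = q - 1" using False by (simp add: dsuf_def)
      then have "x \<in> Lsuf_from m (q - 1)" using r xl by (simp add: dfa_lang_def)
      then have "x \<in> Lsuf m" using Cons.IH[of "q - 1"] Cons.prems by auto
      moreover have "dsuf m 0 a = 0" using True by (simp add: dsuf_def)
      ultimately show ?thesis using xl by (simp add: dfa_lang_def)
    next
      case False2: False
      then have "dsuf m q a = m + 1" using False Cons.prems(1) unfolding dsuf_def by auto
      then have "run (dsuf m) x (dsuf m q a) = m + 1" using run_dsuf_dead[of m x] by simp
      then show ?thesis using r Cons.prems(3) by simp
    qed
  qed
qed

lemma Lsuf_suffix:
  assumes "m \<ge> 2" shows "suffix_closed (Lsuf m)"
  unfolding suffix_closed_def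
proof (intro ballI allI impI)
  fix w v assume w: "w \<in> Lsuf m" and "suffix v w"
  then obtain u where u: "w = u @ v" by (auto simp: suffix_def)
  have ul: "u \<in> lists Asuf" using w u by (auto simp: dfa_lang_def)
  have "v \<in> lquot u (Lsuf m)" using w u by (simp add: lquot_def)
  then have "v \<in> Lsuf_from m (run (dsuf m) u 0)" using lquot_dfa_lang[OF ul] by simp
  moreover have "run (dsuf m) u 0 \<in> {0..m+1}"
  proof -
    have d: "\<And>q a. q \<in> {0..m+1} \<Longrightarrow> a \<in> Asuf \<Longrightarrow> dsuf m q a \<in> {0..m+1}" by (rule dsuf_in)
    show ?thesis using run_in[of "{0..m+1}" Asuf "dsuf m" u 0, OF d ul] by simp
  qed
  ultimately show "v \<in> Lsuf m" using Lsuf_from_sub assms by blast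
qed

definition zsuf :: "nat \<Rightarrow> nat list" where
  "zsuf m = 1 # replicate (m - 1) 0"

lemma run_zsuf: "m \<ge> 2 \<Longrightarrow> run (dsuf m) (zsuf m) 0 = 1"
  using run_rep0[of m m "m - 1"] by (simp add: zsuf_def)

lemma zsuf_in: "m \<ge> 2 \<Longrightarrow> zsuf m \<in> Lsuf m"
  using run_zsuf by (auto simp: dfa_lang_def zsuf_def)

lemma one_notin: "q \<ge> 1 \<Longrightarrow> m \<ge> 2 \<Longrightarrow> 1 # x \<notin> Lsuf_from m q"
proof
  assume q: "q \<ge> 1" and m: "m \<ge> 2" and x: "1 # x \<in> Lsuf_from m q"
  have "dsuf m q 1 = m + 1" using q by (simp add: dsuf_def)
  then have "run (dsuf m) (1 # x) q = m + 1" using run_dsuf_dead[of m x] by simp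
  then show False using x m by (simp add: dfa_lang_def)
qed

lemma rep_in: "q \<in> {1..m} \<Longrightarrow> replicate (q - 1) 0 \<in> Lsuf_from m q"
  using run_rep0[of q m "q - 1"] by (auto simp: dfa_lang_def)

lemma rep_notin: "p \<in> {1..m} \<Longrightarrow> q \<in> {1..m} \<Longrightarrow> p < q \<Longrightarrow> replicate (p - 1) 0 \<notin> Lsuf_from m q"
  using run_rep0[of q m "p - 1"] by (auto simp: dfa_lang_def)

lemma Lsuf_from_prefix: "q \<in> {1..m} \<Longrightarrow> x \<in> Lsuf_from m q \<Longrightarrow> m \<ge> 2 \<Longrightarrow> prefix (replicate (q - 1) 0) x"
proof (induction x arbitrary: q)
  case Nil then show ?case by (simp add: dfa_lang_def)
next
  case (Cons a x)
  show ?case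
  proof (cases "q = 1")
    case True then show ?thesis by simp
  next
    case False
    have "a = 0" using one_notin[of q m x] Cons.prems by (auto simp: dfa_lang_def)
    moreover have "dsuf m q 0 = q - 1" using Cons.prems(1) False by (simp add: dsuf_def)
    ultimately have "x \<in> Lsuf_from m (q - 1)" using Cons.prems by (simp add: dfa_lang_def)
    moreover have "q - 1 \<in> {1..m}" using Cons.prems(1) False by auto
    ultimately have P: "prefix (replicate (q - 1 - 1) 0) x" using Cons.IH[of "q - 1"] Cons.prems(3) by blast
    have "q \<ge> 2" using False Cons.prems(1) by auto
    define k where "k = q - 2"
    have "q = Suc (Suc k)" using \<open>q \<ge> 2\<close> unfolding k_def by simp
    then show ?thesis using \<open>a = 0\<close> P by simp
  qed
qed

lemma sc_Lsuf:
  assumes m: "m \<ge> 2"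
  shows "sc Asuf (Lsuf m) = m + 2" "quotients Asuf (Lsuf m) = Lsuf_from m ` {0..m+1}"
proof -
  have reach: "\<exists>w\<in>lists Asuf. run (dsuf m) w 0 = q" if "q \<in> {0..m+1}" for q
  proof -
    have "q = 0 \<or> q \<in> {1..m} \<or> q = m + 1" using that by auto
    then consider "q = 0" | "q \<in> {1..m}" | "q = m + 1" by blast
    then show ?thesis
    proof cases
      case 1 then show ?thesis by (intro bexI[of _ "[]"]) auto
    next
      case 2
      have "run (dsuf m) (1 # replicate (m - q) 0) 0 = q" using run_rep0[of m m "m - q"] 2 by (simp add: dsuf_def)
      then show ?thesis by (intro bexI[of _ "1 # replicate (m - q) 0"]) auto
    next
      case 3
      have "run (dsuf m) [1, 1] 0 = m + 1" using m by (simp add: dsuf_def)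
      then show ?thesis using 3 by (intro bexI[of _ "[1, 1]"]) auto
    qed
  qed
  have separate: "Lsuf_from m p \<noteq> Lsuf_from m q" if "p \<in> {0..m+1}" "q \<in> {0..m+1}" "p < q" for p q
  proof (cases "p = 0")
    case True
    have "zsuf m \<in> Lsuf_from m p" using zsuf_in m True by simp
    moreover have "zsuf m \<notin> Lsuf_from m q" unfolding zsuf_def using one_notin[of q m] that True m by simp
    ultimately show ?thesis by blast
  next
    case False
    then have p: "p \<in> {1..m}" using that by auto
    have "replicate (p - 1) 0 \<in> Lsuf_from m p" using rep_in[OF p] .
    moreover have "replicate (p - 1) 0 \<notin> Lsuf_from m q"
    proof (cases "q = m + 1")
      case True then show ?thesis using Lsuf_from_dead[of m] m by simp
    next
      case False
      then have "q \<in> {1..m}" using that by auto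
      then show ?thesis using rep_notin[OF p] that by blast
    qed
    ultimately show ?thesis by blast
  qed
  note S = sc_dfa[of "{0..m+1}" 0 Asuf "dsuf m" "{0, 1}", OF _ _ dsuf_in reach separate]
  show "sc Asuf (Lsuf m) = m + 2" using S(1) by simp
  show "quotients Asuf (Lsuf m) = Lsuf_from m ` {0..m+1}" using S(2) by simp
qed

lemma prefix_nth: "prefix a b \<Longrightarrow> i < length a \<Longrightarrow> a ! i = b ! i"
  by (auto simp: prefix_def nth_append)

lemma Nil_Lsuf: "[] \<in> Lsuf m"
  by (simp add: Nil_dfa_lang)

lemma Nil_Lsuf_from: "s \<in> {2..m+1} \<Longrightarrow> [] \<notin> Lsuf_from m s"
  by (simp add: Nil_dfa_lang)

lemma Lsuf_from1_absorb: "m \<ge> 2 \<Longrightarrow> lconc (Lsuf_from m 1) (Ksuf m) = Ksuf m"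
proof -
  assume m: "m \<ge> 2"
  have sub: "Lsuf_from m 1 \<subseteq> Lsuf m" using Lsuf_from_sub[of 1 m] m by auto
  show ?thesis by (rule lconc_absorb[OF _ sub Nil_Lsuf]) (simp add: Nil_dfa_lang)
qed

text \<open>Quotients of the star: the state 1 is absorbed (its language lies in L and contains []),
  so only the non-final states 2..m+1 survive as prefixes L_s of L*.\<close>
lemma lquot_Ksuf: "a \<in> Asuf \<Longrightarrow> lquot [a] (Ksuf m) = lconc (Lsuf_from m (dsuf m 0 a)) (Ksuf m)"
  by (simp add: lquot_kstar lquot_dfa_lang_step)

lemma lquot_Ksuf_state: "s \<in> {2..m+1} \<Longrightarrow> a \<in> Asuf \<Longrightarrow>
   lquot [a] (lconc (Lsuf_from m s) (Ksuf m)) = lconc (Lsuf_from m (dsuf m s a)) (Ksuf m)"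
  using Nil_Lsuf_from[of s m] by (simp add: lquot_lconc lquot_dfa_lang_step)

definition Fsuf :: "nat \<Rightarrow> nat list set set" where
  "Fsuf m = insert (Ksuf m) ((\<lambda>s. lconc (Lsuf_from m s) (Ksuf m)) ` {2..m+1})"

lemma Fsuf_closed:
  assumes m: "m \<ge> 2" and Y: "Y \<in> Fsuf m" and a: "a \<in> Asuf"
  shows "lquot [a] Y \<in> Fsuf m"
proof -
  have cs: "lconc (Lsuf_from m s) (Ksuf m) \<in> Fsuf m" if "s \<in> {1..m+1}" for s
  proof (cases "s = 1")
    case True then show ?thesis using Lsuf_from1_absorb[OF m] unfolding Fsuf_def by simp
  next
    case False then have "s \<in> {2..m+1}" using that by auto
    then show ?thesis unfolding Fsuf_def by blast
  qed
  from Y consider "Y = Ksuf m" | s where "s \<in> {2..m+1}" "Y = lconc (Lsuf_from m s) (Ksuf m)"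
    unfolding Fsuf_def by blast
  then show ?thesis
  proof cases
    case 1
    show ?thesis
    proof (cases "a = 0")
      case True
      then have "lquot [a] Y = Ksuf m" using 1 lquot_Ksuf[OF a] lconc_kstar_eq[OF Nil_Lsuf] by simp
      then show ?thesis unfolding Fsuf_def by simp
    next
      case False
      then have "a = 1" using a by simp
      then have "lquot [a] Y = lconc (Lsuf_from m m) (Ksuf m)" using 1 lquot_Ksuf[OF a] by simp
      then show ?thesis using cs[of m] m by simp
    qed
  next
    case 2
    then have "lquot [a] Y = lconc (Lsuf_from m (dsuf m s a)) (Ksuf m)" using lquot_Ksuf_state[OF _ a] by simp
    moreover have "dsuf m s a \<in> {1..m+1}" using 2 a unfolding dsuf_def by auto
    ultimately show ?thesis using cs by simp
  qed
qed

lemma lquot_Ksuf_reach: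
  "m \<ge> 2 \<Longrightarrow> k \<le> m - 2 \<Longrightarrow> lquot (1 # replicate k 0) (Ksuf m) = lconc (Lsuf_from m (m - k)) (Ksuf m)"
proof (induction k)
  case 0 then show ?case using lquot_Ksuf[of 1 m] by simp
next
  case (Suc k)
  have eq: "1 # replicate (Suc k) 0 = (1 # replicate k 0) @ [0]" by (simp add: replicate_append_same)
  have A: "lquot (1 # replicate (Suc k) 0) (Ksuf m) = lquot [0] (lquot (1 # replicate k 0) (Ksuf m))"
    unfolding eq lquot_append ..
  have B: "lquot (1 # replicate k 0) (Ksuf m) = lconc (Lsuf_from m (m - k)) (Ksuf m)" using Suc by simp
  have C: "lquot [0] (lconc (Lsuf_from m (m - k)) (Ksuf m)) = lconc (Lsuf_from m (dsuf m (m - k) 0)) (Ksuf m)"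
    using Suc.prems by (intro lquot_Ksuf_state) auto
  have D: "dsuf m (m - k) 0 = m - Suc k" using Suc.prems by (simp add: dsuf_q0)
  show ?case using A B C D by simp
qed

text \<open>Separating words: zsuf m lies in L* but in no (L_s)L*, and 0^(p-1) zsuf m separates
  (L_p)L* from (L_q)L* for p < q.\<close>
lemma zsuf_notin_state: "m \<ge> 2 \<Longrightarrow> s \<in> {2..m+1} \<Longrightarrow> zsuf m \<notin> lconc (Lsuf_from m s) (Ksuf m)"
proof
  assume m: "m \<ge> 2" and s: "s \<in> {2..m+1}" and z: "zsuf m \<in> lconc (Lsuf_from m s) (Ksuf m)"
  then obtain x y where xy: "zsuf m = x @ y" "x \<in> Lsuf_from m s" by (auto simp: lconc_def)
  have "x \<noteq> []" using xy Nil_Lsuf_from[OF s] by auto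
  then obtain x' where "x = 1 # x'" using xy(1) unfolding zsuf_def by (cases x) auto
  then show False using one_notin[of s m x'] xy s m by auto
qed

definition zsuf_shift :: "nat \<Rightarrow> nat \<Rightarrow> nat list" where
  "zsuf_shift m p = replicate (p - 1) 0 @ zsuf m"

lemma zsuf_shift_in: "m \<ge> 2 \<Longrightarrow> p \<in> {2..m} \<Longrightarrow> zsuf_shift m p \<in> lconc (Lsuf_from m p) (Ksuf m)"
  unfolding zsuf_shift_def using rep_in[of p m] zsuf_in[of m] kstar_sub
  by (intro lconc_memI) auto

lemma zsuf_shift_notin:
  assumes m: "m \<ge> 2" and p: "p \<in> {2..m}" and q: "q \<in> {2..m+1}" and pq: "p < q"
  shows "zsuf_shift m p \<notin> lconc (Lsuf_from m q) (Ksuf m)"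
proof
  assume "zsuf_shift m p \<in> lconc (Lsuf_from m q) (Ksuf m)"
  then obtain x y where xy: "zsuf_shift m p = x @ y" "x \<in> Lsuf_from m q" by (auto simp: lconc_def)
  show False
  proof (cases "q = m + 1")
    case True then show False using xy Lsuf_from_dead[of m] m by simp
  next
    case False
    then have q': "q \<in> {1..m}" using q by auto
    have "prefix (replicate (q - 1) 0) x" using Lsuf_from_prefix[OF q' xy(2) m] .
    then have "prefix (replicate (q - 1) 0) (zsuf_shift m p)" using xy(1) by (simp add: prefix_def) (metis append.assoc)
    then have "replicate (q - 1) 0 ! (p - 1) = zsuf_shift m p ! (p - 1)" using pq p by (intro prefix_nth) auto
    moreover have "zsuf_shift m p ! (p - 1) = 1" unfolding zsuf_shift_def zsuf_def by (simp add: nth_append)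
    moreover have "p - 1 < q - 1" using pq p by auto
    then have "replicate (q - 1) 0 ! (p - 1) = 0" by simp
    ultimately show False by (metis zero_neq_one)
  qed
qed

lemma Fsuf_reach:
  assumes m: "m \<ge> 2" and Y: "Y \<in> Fsuf m"
  shows "\<exists>w\<in>lists Asuf. lquot w (Ksuf m) = Y"
proof -
  from Y consider "Y = Ksuf m" | s where "s \<in> {2..m+1}" "Y = lconc (Lsuf_from m s) (Ksuf m)"
    unfolding Fsuf_def by blast
  then show ?thesis
  proof cases
    case 1
    have "lquot [] (Ksuf m) = Y" using 1 by simp
    then show ?thesis by blast
  next
    case 2
    show ?thesis
    proof (cases "s = m + 1")
      case True
      have "lquot [1, 1] (Ksuf m) = lquot [1] (lquot [1] (Ksuf m))" using lquot_append[of "[1]" "[1]" "Ksuf m"] by simp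
      also have "lquot [1] (Ksuf m) = lconc (Lsuf_from m m) (Ksuf m)" using lquot_Ksuf_reach[of m 0] m by simp
      also have "lquot [1] (lconc (Lsuf_from m m) (Ksuf m)) = lconc (Lsuf_from m (dsuf m m 1)) (Ksuf m)"
        using m by (intro lquot_Ksuf_state) auto
      also have "dsuf m m 1 = m + 1" using m dsuf_q1[of m m] by simp
      finally have "lquot [1, 1] (Ksuf m) = Y" using 2 True by simp
      moreover have "[1, 1] \<in> lists Asuf" by simp
      ultimately show ?thesis by blast
    next
      case False
      then have "m - s \<le> m - 2" "m - (m - s) = s" using 2 by auto
      then have "lquot (1 # replicate (m - s) 0) (Ksuf m) = Y" using lquot_Ksuf_reach[OF m, of "m - s"] 2 by simp
      moreover have "1 # replicate (m - s) 0 \<in> lists Asuf" by auto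
      ultimately show ?thesis by blast
    qed
  qed
qed

lemma inj_on_Ksuf_states:
  assumes m: "m \<ge> 2" shows "inj_on (\<lambda>s. lconc (Lsuf_from m s) (Ksuf m)) {2..m+1}"
proof (rule inj_onI)
  fix p q assume pq: "p \<in> {2..m+1}" "q \<in> {2..m+1}" "lconc (Lsuf_from m p) (Ksuf m) = lconc (Lsuf_from m q) (Ksuf m)"
  show "p = q"
  proof (rule ccontr)
    assume "p \<noteq> q"
    then consider "p < q" | "q < p" by linarith
    then show False
    proof cases
      case 1
      then have p2: "p \<in> {2..m}" using pq by auto
      show False using zsuf_shift_in[OF m p2] zsuf_shift_notin[OF m p2 pq(2) 1] pq(3) by simp
    next
      case 2
      then have q2: "q \<in> {2..m}" using pq by auto
      show False using zsuf_shift_in[OF m q2] zsuf_shift_notin[OF m q2 pq(1) 2] pq(3) by simp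
    qed
  qed
qed

lemma sc_Ksuf:
  assumes m: "m \<ge> 2"
  shows "sc Asuf (Ksuf m) = m + 1" "quotients Asuf (Ksuf m) = Fsuf m"
proof -
  have X: "Ksuf m \<in> Fsuf m" unfolding Fsuf_def by simp
  have re: "\<exists>w\<in>lists Asuf. lquot w (Ksuf m) = Y" if "Y \<in> Fsuf m" for Y
    by (rule Fsuf_reach[OF m that])
  note inj = inj_on_Ksuf_states[OF m]
  have ne: "Ksuf m \<notin> (\<lambda>s. lconc (Lsuf_from m s) (Ksuf m)) ` {2..m+1}"
  proof
    assume "Ksuf m \<in> (\<lambda>s. lconc (Lsuf_from m s) (Ksuf m)) ` {2..m+1}"
    then obtain s where s: "s \<in> {2..m+1}" "Ksuf m = lconc (Lsuf_from m s) (Ksuf m)" by blast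
    have "zsuf m \<in> Ksuf m" using zsuf_in[OF m] kstar_sub by blast
    then show False using zsuf_notin_state[OF m s(1)] s(2) by simp
  qed
  have fin: "finite ((\<lambda>s. lconc (Lsuf_from m s) (Ksuf m)) ` {2..m+1})" by simp
  have "card (Fsuf m) = Suc (card ((\<lambda>s. lconc (Lsuf_from m s) (Ksuf m)) ` {2..m+1}))"
    unfolding Fsuf_def by (rule card_insert_disjoint[OF fin ne])
  also have "card ((\<lambda>s. lconc (Lsuf_from m s) (Ksuf m)) ` {2..m+1}) = m" using card_image[OF inj] by simp
  finally have c: "card (Fsuf m) = m + 1" by simp
  have "sc Asuf (Ksuf m) = card (Fsuf m)" by (rule sc_eq_family(1)[OF X Fsuf_closed[OF m] re])
  then show "sc Asuf (Ksuf m) = m + 1" using c by simp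
  show "quotients Asuf (Ksuf m) = Fsuf m" by (rule sc_eq_family(2)[OF X Fsuf_closed[OF m] re])
qed

text \<open>The separation conditions of sc_kstar_compl_eq for L and L*: no quotient by a nonempty
  word equals the language without [], as witnessed by [] or by zsuf m.\<close>
lemma Lsuf_separate:
  assumes m: "m \<ge> 2" and w: "w \<in> lists Asuf"
  shows "lquot w (Lsuf m) \<noteq> Lsuf m - {[]}"
proof -
  have e: "lquot w (Lsuf m) = Lsuf_from m (run (dsuf m) w 0)" by (rule lquot_dfa_lang[OF w])
  show ?thesis
  proof (cases "run (dsuf m) w 0 \<in> {0, 1}")
    case True
    then have "[] \<in> lquot w (Lsuf m)" unfolding e by (simp add: Nil_dfa_lang)
    then show ?thesis by blast
  next
    case False
    then have "zsuf m \<notin> lquot w (Lsuf m)" unfolding e zsuf_def using one_notin[OF _ m] by simp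
    moreover have "zsuf m \<in> Lsuf m - {[]}" using zsuf_in[OF m] by (simp add: zsuf_def)
    ultimately show ?thesis by blast
  qed
qed

lemma Ksuf_separate:
  assumes m: "m \<ge> 2" and w: "w \<in> lists Asuf"
  shows "lquot w (Ksuf m) \<noteq> Ksuf m - {[]}"
proof -
  have "lquot w (Ksuf m) \<in> Fsuf m" using sc_Ksuf(2)[OF m] w by blast
  then consider "lquot w (Ksuf m) = Ksuf m"
    | s where "s \<in> {2..m+1}" "lquot w (Ksuf m) = lconc (Lsuf_from m s) (Ksuf m)"
    unfolding Fsuf_def by blast
  then show ?thesis
  proof cases
    case 1 then show ?thesis by (metis Diff_iff insertI1 kstar_Nil)
  next
    case 2
    then have "zsuf m \<notin> lquot w (Ksuf m)" using zsuf_notin_state[OF m] by simp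
    moreover have "zsuf m \<in> Ksuf m - {[]}" using zsuf_in[OF m] kstar_sub by (auto simp: zsuf_def)
    ultimately show ?thesis by blast
  qed
qed

lemma witness_suffix_closed:
  assumes n: "n \<ge> 4"
  shows "\<exists>(\<Sigma>::nat set) L. hyp \<Sigma> L \<and> suffix_closed L \<and> sc \<Sigma> L = n \<and>
          sc \<Sigma> (kstar L) = n - 1 \<and>
          sc \<Sigma> (kstar (compl_lang \<Sigma> (kstar L))) = n - 1 + 1 \<and>
          sc \<Sigma> (kstar (compl_lang \<Sigma> L)) = n + 1"
proof -
  define m where "m = n - 2"
  have m: "m \<ge> 2" and nm: "n = m + 2" using n unfolding m_def by auto
  have L_lists: "Lsuf m \<subseteq> lists Asuf" by (rule dfa_lang_lists)
  have K_lists: "Ksuf m \<subseteq> lists Asuf" by (rule kstar_lists[OF L_lists])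
  have sL: "suffix_closed (Lsuf m)" by (rule Lsuf_suffix[OF m])
  have sK: "suffix_closed (Ksuf m)" by (rule kstar_suffix_closed[OF sL])
  have x: "[0] \<in> Lsuf m" by (simp add: single_dfa_lang)
  have z: "zsuf m \<in> Lsuf m" by (rule zsuf_in[OF m])
  have yK: "zsuf m @ zsuf m \<in> Ksuf m" using kstar_Cons[OF z] z kstar_sub by blast
  have yL: "zsuf m @ zsuf m \<notin> Lsuf m"
  proof -
    have "run (dsuf m) (zsuf m @ zsuf m) 0 = run (dsuf m) (zsuf m) 1" by (simp add: run_append run_zsuf[OF m])
    also have "\<dots> = m + 1" using dsuf_q1[of 1 m] run_dsuf_dead[of m] by (simp add: zsuf_def)
    finally show ?thesis using m by (simp add: dfa_lang_def)
  qed
  have one: "[1] \<notin> Lsuf m" "[1] \<in> lists Asuf" using m by (simp_all add: single_dfa_lang)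
  have reg: "regular_lang Asuf (Lsuf m)"
    by (rule regular_dfa_lang[where Q="{0..m+1}"]) (use dsuf_in in auto)
  have hyp: "hyp Asuf (Lsuf m)"
    using hyp_intro[OF _ L_lists reg _ Nil_Lsuf one(2,1) x _ yK yL] sL unfolding closed_lang_def by simp
  have scL: "sc Asuf (Lsuf m) = n" using sc_Lsuf(1)[OF m] nm by simp
  have scK: "sc Asuf (Ksuf m) = n - 1" using sc_Ksuf(1)[OF m] nm by simp
  have finL: "finite (quotients Asuf (Lsuf m))" using sc_Lsuf(2)[OF m] by simp
  have finK: "finite (quotients Asuf (Ksuf m))" using sc_Ksuf(2)[OF m] by (simp add: Fsuf_def)
  have r0: "[0] \<in> lists Asuf" by simp
  have resetL: "lquot [0] (Lsuf m) = Lsuf m" by (simp add: lquot_dfa_lang_step)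
  have resetK: "lquot [0] (Ksuf m) = Ksuf m" using lquot_Ksuf[of 0 m] lconc_kstar_eq[OF Nil_Lsuf] by simp
  have "sc Asuf (kstar (compl_lang Asuf (Lsuf m))) = n + 1"
    using sc_kstar_compl_eq[OF L_lists Nil_Lsuf _ finL r0 _ resetL Lsuf_separate[OF m]] sL scL by simp
  moreover have "sc Asuf (kstar (compl_lang Asuf (Ksuf m))) = n - 1 + 1"
    using sc_kstar_compl_eq[OF K_lists kstar_Nil _ finK r0 _ resetK Ksuf_separate[OF m]] sK scK by simp
  ultimately show ?thesis using hyp sL scL scK by blast
qed

section \<open>A subword-closed witness\<close>

text \<open>Alphabet {0,1,2}: the words over {0,1} with fewer than k ones.  Its minimal DFA counts
  the ones up to k (state k is dead, and so is every letter 2), giving k+1 quotients, while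
  the star is all of {0,1}^* and has just 2 quotients.\<close>
definition dsub :: "nat \<Rightarrow> nat \<Rightarrow> nat \<Rightarrow> nat" where
  "dsub k q a = (if a = 0 then q else if a = 1 then min (q + 1) k else k)"

abbreviation "Asub \<equiv> {0::nat, 1, 2}"
abbreviation "Lsub_from k q \<equiv> dfa_lang Asub (dsub k) {0..<k} q"
abbreviation "Lsub k \<equiv> Lsub_from k 0"

definition ones :: "nat list \<Rightarrow> nat" where
  "ones x = length (filter (\<lambda>a. a = 1) x)"

text \<open>Stated with Suc 0, the normal form the simplifier produces for the letter 1.\<close>
lemma ones_replicate [simp]: "ones (replicate j (Suc 0)) = j"
  by (simp add: ones_def)

lemma run_dsub: "x \<in> lists Asub \<Longrightarrow> q \<le> k \<Longrightarrow>
  run (dsub k) x q = (if set x \<subseteq> {0, 1} then min (q + ones x) k else k)"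
proof (induction x arbitrary: q)
  case Nil then show ?case by (simp add: ones_def)
next
  case (Cons a x)
  have xl: "x \<in> lists Asub" "a \<in> Asub" using Cons.prems by auto
  consider "a = 0" | "a = 1" | "a = 2" using xl(2) by blast
  then show ?case
  proof cases
    case 1 then show ?thesis using Cons.IH[OF xl(1) Cons.prems(2)] by (simp add: dsub_def ones_def)
  next
    case 2
    have "min (q + 1) k \<le> k" by simp
    then show ?thesis using Cons.IH[OF xl(1), of "min (q + 1) k"] 2 by (auto simp: dsub_def ones_def)
  next
    case 3
    have "run (dsub k) (a # x) q = run (dsub k) x k" using 3 by (simp add: dsub_def)
    also have "\<dots> = k" using Cons.IH[OF xl(1), of k] by simp
    finally show ?thesis using 3 by simp
  qed
qed

lemma Lsub_from_eq: "q \<le> k \<Longrightarrow> Lsub_from k q = {x \<in> lists Asub. set x \<subseteq> {0, 1} \<and> q + ones x < k}"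
proof (intro equalityI subsetI)
  fix x assume q: "q \<le> k" and x: "x \<in> Lsub_from k q"
  then have xl: "x \<in> lists Asub" by (simp add: dfa_lang_def)
  note r = run_dsub[OF xl q]
  have "run (dsub k) x q \<in> {0..<k}" using x by (simp add: dfa_lang_def)
  then have "(if set x \<subseteq> {0, 1} then min (q + ones x) k else k) < k" unfolding r by simp
  then show "x \<in> {x \<in> lists Asub. set x \<subseteq> {0, 1} \<and> q + ones x < k}"
    using xl by (auto split: if_splits)
next
  fix x assume q: "q \<le> k" and x: "x \<in> {x \<in> lists Asub. set x \<subseteq> {0, 1} \<and> q + ones x < k}"
  then have xl: "x \<in> lists Asub" by simp
  note r = run_dsub[OF xl q]
  have "run (dsub k) x q \<in> {0..<k}" unfolding r using x by auto
  then show "x \<in> Lsub_from k q" using xl by (simp add: dfa_lang_def)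
qed

lemma dsub_in: "q \<in> {0..k} \<Longrightarrow> a \<in> Asub \<Longrightarrow> dsub k q a \<in> {0..k}"
  by (auto simp: dsub_def)

lemma Lsub_subword: "subword_closed (Lsub k)"
  unfolding subword_closed_def
proof (intro ballI allI impI)
  fix w u assume w: "w \<in> Lsub k" and su: "subseq u w"
  have wL: "w \<in> lists Asub" "set w \<subseteq> {0, 1}" "ones w < k" using w Lsub_from_eq[of 0 k] by auto
  have "set u \<subseteq> set w"
  proof
    fix x assume "x \<in> set u"
    then obtain y where "y \<in> set w" "x = y" using list_emb_set[OF su] by metis
    then show "x \<in> set w" by simp
  qed
  moreover have "ones u \<le> ones w"
    unfolding ones_def using list_emb_length[OF subseq_filter[OF su]] .
  ultimately show "u \<in> Lsub k" using wL Lsub_from_eq[of 0 k] by auto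
qed

text \<open>The states 0..k are reached by 1^q and separated by 1^(k-1-p).\<close>
lemma sc_Lsub:
  assumes k: "k \<ge> 1"
  shows "sc Asub (Lsub k) = k + 1" "quotients Asub (Lsub k) = Lsub_from k ` {0..k}"
proof -
  have reach: "\<exists>w\<in>lists Asub. run (dsub k) w 0 = q" if "q \<in> {0..k}" for q
  proof -
    have rl: "replicate q 1 \<in> lists Asub" by auto
    have "run (dsub k) (replicate q 1) 0 = q" using that run_dsub[OF rl, of 0 k] by (simp add: set_replicate_conv_if)
    moreover note rl
    ultimately show ?thesis by blast
  qed
  have separate: "Lsub_from k p \<noteq> Lsub_from k q" if "p \<in> {0..k}" "q \<in> {0..k}" "p < q" for p q
  proof -
    have pk: "p \<le> k" "q \<le> k" using that by auto
    have "replicate (k - 1 - p) 1 \<in> Lsub_from k p" unfolding Lsub_from_eq[OF pk(1)] using that by auto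
    moreover have "replicate (k - 1 - p) 1 \<notin> Lsub_from k q" unfolding Lsub_from_eq[OF pk(2)] using that by auto
    ultimately show ?thesis by blast
  qed
  note S = sc_dfa[of "{0..k}" 0 Asub "dsub k" "{0..<k}", OF _ _ dsub_in reach separate]
  show "sc Asub (Lsub k) = k + 1" using S(1) by simp
  show "quotients Asub (Lsub k) = Lsub_from k ` {0..k}" using S(2) by simp
qed

lemma kstar_Lsub:
  assumes k: "k \<ge> 2" shows "kstar (Lsub k) = lists {0, 1}"
proof -
  have "factor_closed (Lsub k)" by (rule subword_imp_factor_closed[OF Lsub_subword])
  then have "kstar (Lsub k) = lists {a \<in> Asub. [a] \<in> Lsub k}"
    by (rule kstar_factor_closed[OF dfa_lang_lists])
  also have "{a \<in> Asub. [a] \<in> Lsub k} = {0, 1}"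
    using k by (auto simp: single_dfa_lang dsub_def)
  finally show ?thesis .
qed

lemma witness_subword_closed:
  assumes n: "n \<ge> 4"
  shows "\<exists>(\<Sigma>::nat set) L. hyp \<Sigma> L \<and> subword_closed L \<and> sc \<Sigma> L = n \<and>
          sc \<Sigma> (kstar L) = 2 \<and>
          sc \<Sigma> (kstar (compl_lang \<Sigma> (kstar L))) = 2 + 1 \<and>
          sc \<Sigma> (kstar (compl_lang \<Sigma> L)) = n + 1"
proof -
  define k where "k = n - 1"
  have k: "k \<ge> 3" and nk: "n = k + 1" using n unfolding k_def by auto
  have L_lists: "Lsub k \<subseteq> lists Asub" by (rule dfa_lang_lists)
  have K: "kstar (Lsub k) = lists {0, 1}" using kstar_Lsub k by simp
  have K_lists: "lists {0::nat, 1} \<subseteq> lists Asub" by auto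
  have nilL: "[] \<in> Lsub k" using k by (simp add: Nil_dfa_lang)
  have sL: "subword_closed (Lsub k)" by (rule Lsub_subword)
  have pL: "prefix_closed (Lsub k)" by (rule subword_imp_prefix_closed[OF sL])
  have x: "[0] \<in> Lsub k" using k by (simp add: single_dfa_lang dsub_def)
  have yK: "replicate k 1 \<in> kstar (Lsub k)" unfolding K by auto
  have yL: "replicate k 1 \<notin> Lsub k" unfolding Lsub_from_eq[OF le0] by simp
  have two: "[2] \<notin> Lsub k" "[2] \<in> lists Asub" unfolding Lsub_from_eq[OF le0] by simp_all
  have reg: "regular_lang Asub (Lsub k)"
    by (rule regular_dfa_lang[where Q="{0..k}"]) (use dsub_in in auto)
  have hyp: "hyp Asub (Lsub k)"
    using hyp_intro[OF _ L_lists reg _ nilL two(2,1) x _ yK yL] sL unfolding closed_lang_def by simp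
  have scL: "sc Asub (Lsub k) = n" using sc_Lsub(1)[of k] k nk by simp
  have scK: "sc Asub (lists {0, 1}) = 2" by (rule sc_lists[of 2]) simp_all
  have finL: "finite (quotients Asub (Lsub k))" using sc_Lsub(2)[of k] k by simp
  have r0: "[0] \<in> lists Asub" by simp
  have resetL: "lquot [0] (Lsub k) = Lsub k" by (simp add: lquot_dfa_lang_step dsub_def)
  have resetK: "lquot [0] (lists {0::nat, 1}) = lists {0, 1}" by (simp add: lquot_lists_eq)
  have x0: "[0] \<in> lists {0::nat, 1}" by simp
  have pK: "prefix_closed (lists {0::nat, 1})" by (rule prefix_closed_lists)
  have "sc Asub (kstar (compl_lang Asub (Lsub k))) = n + 1"
    using sc_kstar_compl_eq[OF L_lists nilL _ finL r0 _ resetL prefix_closed_separate[OF pL x]] pL scL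
    by simp
  moreover have "sc Asub (kstar (compl_lang Asub (lists {0, 1}))) = 2 + 1"
    using sc_kstar_compl_eq[OF K_lists lists.Nil _ sc_lists_le(2) r0 _ resetK
        prefix_closed_separate[OF pK x0]] pK scK
    by simp
  ultimately show ?thesis using hyp sL scL scK unfolding K[symmetric] by blast
qed

lemma bounds_attained:
  "\<forall>cls \<in> {(prefix_closed, \<lambda>n::nat. 2 ^ (n - 2) + 1), (suffix_closed, \<lambda>n. n - 1),
              (subword_closed, \<lambda>n. 2)}.
      \<exists>N. \<forall>n\<ge>N. \<exists>(\<Sigma>::nat set) L. hyp \<Sigma> L \<and> fst cls L \<and> sc \<Sigma> L = n \<and>
          sc \<Sigma> (kstar L) = snd cls n \<and>
          sc \<Sigma> (kstar (compl_lang \<Sigma> (kstar L))) = snd cls n + 1 \<and>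
          sc \<Sigma> (kstar (compl_lang \<Sigma> L)) = n + 1"
proof (intro ballI)
  fix cls :: "(nat list set \<Rightarrow> bool) \<times> (nat \<Rightarrow> nat)"
  assume "cls \<in> {(prefix_closed, \<lambda>n::nat. 2 ^ (n - 2) + 1), (suffix_closed, \<lambda>n. n - 1),
              (subword_closed, \<lambda>n. 2)}"
  then show "\<exists>N. \<forall>n\<ge>N. \<exists>(\<Sigma>::nat set) L. hyp \<Sigma> L \<and> fst cls L \<and> sc \<Sigma> L = n \<and>
          sc \<Sigma> (kstar L) = snd cls n \<and>
          sc \<Sigma> (kstar (compl_lang \<Sigma> (kstar L))) = snd cls n + 1 \<and>
          sc \<Sigma> (kstar (compl_lang \<Sigma> L)) = n + 1"
    by (elim insertE emptyE; simp only: fst_conv snd_conv;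
        intro exI[of _ 4] allI impI witness_prefix_closed witness_suffix_closed witness_subword_closed)
qed

theorem theorem7:
  shows
  "(\<forall>(\<Sigma>::'a set) L n. hyp \<Sigma> L \<and> sc \<Sigma> L = n \<longrightarrow>
      (let Lm = compl_lang \<Sigma> L; Lmst = kstar Lm; Lmstm = compl_lang \<Sigma> Lmst;
           Ls = kstar L; Lsm = compl_lang \<Sigma> Ls; Lsms = kstar Lsm; Lsmsm = compl_lang \<Sigma> Lsms
       in sc \<Sigma> Lm = n \<and>
          sc \<Sigma> Ls = sc \<Sigma> Lsm \<and>
          sc \<Sigma> Lsms = sc \<Sigma> Lsmsm \<and>
          sc \<Sigma> Lmst = sc \<Sigma> Lmstm \<and> sc \<Sigma> Lmst \<le> n + 1 \<and>
          (prefix_closed L \<longrightarrow> sc \<Sigma> Ls \<le> 2 ^ (n - 2) + 1 \<and> sc \<Sigma> Lsms \<le> 2 ^ (n - 2) + 2) \<and>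
          (suffix_closed L \<longrightarrow> sc \<Sigma> Ls \<le> n - 1 \<and> sc \<Sigma> Lsms \<le> n) \<and>
          (factor_closed L \<or> subword_closed L \<longrightarrow> sc \<Sigma> Ls \<le> 2 \<and> sc \<Sigma> Lsms \<le> 3)))
   \<and>
   (\<forall>cls \<in> {(prefix_closed, \<lambda>n::nat. 2 ^ (n - 2) + 1), (suffix_closed, \<lambda>n. n - 1),
              (subword_closed, \<lambda>n. 2)}.
      \<exists>N. \<forall>n\<ge>N. \<exists>(\<Sigma>::nat set) L. hyp \<Sigma> L \<and> fst cls L \<and> sc \<Sigma> L = n \<and>
          sc \<Sigma> (kstar L) = snd cls n \<and>
          sc \<Sigma> (kstar (compl_lang \<Sigma> (kstar L))) = snd cls n + 1 \<and>
          sc \<Sigma> (kstar (compl_lang \<Sigma> L)) = n + 1)"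
  using upper_bounds bounds_attained by blast

end
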